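(* Let $\mathcal A$ be a perfect algebra over a field $k$ and $S$ a commutative, associative, unital $k$-algebra. If the map $\psi:C(\mathcal A)\otimes S\to C(\mathcal A\otimes S)$, $\gamma\otimes s\mapsto\gamma\otimes L_s$, is an isomorphism, then $$\mathcal D(\mathcal A\otimes S)=\mathcal D(\mathcal A)\overleftarrow{\otimes} S\ \oplus\ C(\mathcal A)\overrightarrow{\otimes}\mathcal D(S).\qquad( * )$$ In particular $( * )$ holds if one of the following is satisfied: (i) $S$ is finite dimensional; (ii) $\mathcal A$ is finitely generated (as an algebra over $k$); (iii) $\mathcal A$ is a pfgc algebra; (iv) $\mathcal A$ is unital. Finally, if one of the following is satisfied: (i) $\mathcal A$ or $S$ is finite dimensional; (ii) $C(\mathcal A)$ is finite dimensional or $S$ is finitely generated over $k$, and one of the following holds: (a) $\mathcal A$ is finitely generated over $k$, (b) $\mathcal A$ is finitely generated as a $C(\mathcal A)$-module and $[\mathcal D(\mathcal A),C(\mathcal A)]=0$, (c) $\mathcal A$ is finitely generated as a $dC(\mathcal A)$-module; then $$\mathcal D(\mathcal A\otimes S)=\mathcal D(\mathcal A)\otimes S\ \oplus\ C(\mathcal A)\otimes\mathcal D(S).$$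
   Context: Algebras are $k$-vector spaces with a bilinear product (not necessarily associative); perfect means $\mathcal A\mathcal A=\mathcal A$. $\mathcal D(\cdot)$ denotes the Lie algebra of derivations. $C(\mathcal A)=\{\gamma\in\operatorname{End}(\mathcal A)\mid\gamma(xy)=\gamma(x)y=x\gamma(y)\}$ is the centroid (commutative when $\mathcal A$ is perfect) and $\mathcal A$ is a $C(\mathcal A)$-module via $\gamma\cdot a=\gamma(a)$; $L_s$ is left multiplication by $s$ on $S$. $\mathcal A$ is pfgc if $\mathcal A\neq0$, perfect, and finitely generated as a $C(\mathcal A)$-module. $dC(\mathcal A)=\{\gamma\in C(\mathcal A)\mid[\gamma,\mathcal D(\mathcal A)]=0\}$. A family $\{f_i\}$ of endomorphisms of a vector space $V$ is summable if for each $v\in V$, $f_i(v)=0$ for all but finitely many $i$ (then $\sum_if_i$ is defined pointwise). For subspaces $E_V\subseteq\operatorname{End}(V)$, $E_W\subseteq\operatorname{End}(W)$: $E_V\overleftarrow{\otimes}E_W$ is the set of operators $\sum_i f_i\otimes g_i$ on $V\otimes W$ with $\{f_i\}\subseteq E_V$ summable on $V$ and $\{g_i\}\subseteq E_W$ arbitrary; given a basis $\{f_i\}$ of $E_V$, $E_V\overrightarrow{\otimes}E_W$ is the set of $\sum_i f_i\otimes g_i$ with $\{g_i\}\subseteq E_W$ summable on $W$. $S$ is identified with a subspace of $\operatorname{End}(S)$ via left multiplication, and all these spaces are regarded inside $\operatorname{End}(\mathcal A\otimes S)$. *)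

theory Defs
  imports Complex_Main "HOL-Library.Function_Algebras"
begin

definition fscale :: "('k \<Rightarrow> 'v \<Rightarrow> 'v) \<Rightarrow> 'k \<Rightarrow> ('u \<Rightarrow> 'v) \<Rightarrow> ('u \<Rightarrow> 'v)" where
  "fscale sc c f = (\<lambda>x. sc c (f x))"

definition bilinear_on ::
  "('k::field \<Rightarrow> 'v::ab_group_add \<Rightarrow> 'v) \<Rightarrow> 'v set \<Rightarrow> ('k \<Rightarrow> 'w::ab_group_add \<Rightarrow> 'w)
    \<Rightarrow> ('k \<Rightarrow> 'u::ab_group_add \<Rightarrow> 'u) \<Rightarrow> ('v \<Rightarrow> 'w \<Rightarrow> 'u) \<Rightarrow> bool" where
  "bilinear_on sv V sw su b \<longleftrightarrow>
     (\<forall>a\<in>V. Vector_Spaces.linear sw su (b a)) \<and>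
     (\<forall>w. \<forall>x\<in>V. \<forall>y\<in>V. b (x + y) w = b x w + b y w) \<and>
     (\<forall>w c. \<forall>x\<in>V. b (sv c x) w = su c (b x w))"

definition is_tensor_product ::
  "('k::field \<Rightarrow> 'v::ab_group_add \<Rightarrow> 'v) \<Rightarrow> 'v set \<Rightarrow> ('k \<Rightarrow> 'w::ab_group_add \<Rightarrow> 'w)
    \<Rightarrow> ('k \<Rightarrow> 't::ab_group_add \<Rightarrow> 't) \<Rightarrow> ('v \<Rightarrow> 'w \<Rightarrow> 't) \<Rightarrow> bool" where
  "is_tensor_product sv V sw st tn \<longleftrightarrow>
     vector_space sv \<and> module.subspace sv V \<and> vector_space sw \<and> vector_space st \<and>
     bilinear_on sv V sw st tn \<and>
     module.span st ((\<lambda>(a, w). tn a w) ` (V \<times> UNIV)) = UNIV \<and>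
     (\<forall>\<beta> :: 'v \<Rightarrow> 'w \<Rightarrow> 'k. bilinear_on sv V sw (*) \<beta> \<longrightarrow>
        (\<exists>\<phi>. Vector_Spaces.linear st (*) \<phi> \<and> (\<forall>a\<in>V. \<forall>w. \<phi> (tn a w) = \<beta> a w)))"

definition is_algebra :: "('k::field \<Rightarrow> 'a::ab_group_add \<Rightarrow> 'a) \<Rightarrow> ('a \<Rightarrow> 'a \<Rightarrow> 'a) \<Rightarrow> bool" where
  "is_algebra sk m \<longleftrightarrow> vector_space sk \<and> bilinear_on sk UNIV sk sk m"

definition perfect :: "('k::field \<Rightarrow> 'a::ab_group_add \<Rightarrow> 'a) \<Rightarrow> ('a \<Rightarrow> 'a \<Rightarrow> 'a) \<Rightarrow> bool" where
  "perfect sk m \<longleftrightarrow> module.span sk {m x y | x y. True} = UNIV"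

definition derivations :: "('k::field \<Rightarrow> 'a::ab_group_add \<Rightarrow> 'a) \<Rightarrow> ('a \<Rightarrow> 'a \<Rightarrow> 'a) \<Rightarrow> ('a \<Rightarrow> 'a) set" where
  "derivations sk m = {d. Vector_Spaces.linear sk sk d \<and> (\<forall>x y. d (m x y) = m (d x) y + m x (d y))}"

definition centroid :: "('k::field \<Rightarrow> 'a::ab_group_add \<Rightarrow> 'a) \<Rightarrow> ('a \<Rightarrow> 'a \<Rightarrow> 'a) \<Rightarrow> ('a \<Rightarrow> 'a) set" where
  "centroid sk m = {\<gamma>. Vector_Spaces.linear sk sk \<gamma> \<and>
      (\<forall>x y. \<gamma> (m x y) = m (\<gamma> x) y \<and> \<gamma> (m x y) = m x (\<gamma> y))}"

definition dcentroid :: "('k::field \<Rightarrow> 'a::ab_group_add \<Rightarrow> 'a) \<Rightarrow> ('a \<Rightarrow> 'a \<Rightarrow> 'a) \<Rightarrow> ('a \<Rightarrow> 'a) set" where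
  "dcentroid sk m = {\<gamma> \<in> centroid sk m. \<forall>d \<in> derivations sk m. \<gamma> \<circ> d = d \<circ> \<gamma>}"

definition tensor_op :: "('k::field \<Rightarrow> 't::ab_group_add \<Rightarrow> 't) \<Rightarrow> ('a \<Rightarrow> 's \<Rightarrow> 't) \<Rightarrow> ('a \<Rightarrow> 'a) \<Rightarrow> ('s \<Rightarrow> 's) \<Rightarrow> ('t \<Rightarrow> 't)"
  where
  "tensor_op st tn f g = (THE h. Vector_Spaces.linear st st h \<and> (\<forall>a s. h (tn a s) = tn (f a) (g s)))"

definition fam_summable :: "'i set \<Rightarrow> ('i \<Rightarrow> 'v \<Rightarrow> 'w::zero) \<Rightarrow> bool" where
  "fam_summable I f \<longleftrightarrow> (\<forall>v. finite {i \<in> I. f i v \<noteq> 0})"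

definition fam_sum :: "'i set \<Rightarrow> ('i \<Rightarrow> 'v \<Rightarrow> 'w::comm_monoid_add) \<Rightarrow> 'v \<Rightarrow> 'w" where
  "fam_sum I f = (\<lambda>v. \<Sum>i \<in> {i \<in> I. f i v \<noteq> 0}. f i v)"

(* E_V <-\<otimes> E_W : sums of f_i \<otimes> g_i with {f_i} \<subseteq> E_V summable, {g_i} \<subseteq> E_W arbitrary *)
definition left_tensor ::
  "('k::field \<Rightarrow> 't::ab_group_add \<Rightarrow> 't) \<Rightarrow> ('a \<Rightarrow> 's \<Rightarrow> 't) \<Rightarrow> ('a::zero \<Rightarrow> 'a) set \<Rightarrow> ('s \<Rightarrow> 's) set
     \<Rightarrow> ('t \<Rightarrow> 't) set" where
  "left_tensor st tn EV EW =
     {fam_sum I (\<lambda>i. tensor_op st tn (f i) (g i)) | (I :: ('a \<Rightarrow> 'a) set) f g.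
        f ` I \<subseteq> EV \<and> g ` I \<subseteq> EW \<and> fam_summable I f}"

(* E_V ->\<otimes> E_W w.r.t. the basis B of E_V: sums of b \<otimes> g_b with {g_b} \<subseteq> E_W summable *)
definition right_tensor ::
  "('k::field \<Rightarrow> 't::ab_group_add \<Rightarrow> 't) \<Rightarrow> ('a \<Rightarrow> 's \<Rightarrow> 't) \<Rightarrow> ('a \<Rightarrow> 'a) set \<Rightarrow> ('s::zero \<Rightarrow> 's) set
     \<Rightarrow> ('t \<Rightarrow> 't) set" where
  "right_tensor st tn B EW =
     {fam_sum B (\<lambda>b. tensor_op st tn b (g b)) | g. g ` B \<subseteq> EW \<and> fam_summable B g}"

(* ordinary tensor product E_V \<otimes> E_W inside End(A \<otimes> S) *)
definition plain_tensor ::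
  "('k::field \<Rightarrow> 't::ab_group_add \<Rightarrow> 't) \<Rightarrow> ('a \<Rightarrow> 's \<Rightarrow> 't) \<Rightarrow> ('a \<Rightarrow> 'a) set \<Rightarrow> ('s \<Rightarrow> 's) set
     \<Rightarrow> ('t \<Rightarrow> 't) set" where
  "plain_tensor st tn EV EW = module.span (fscale st) {tensor_op st tn f g | f g. f \<in> EV \<and> g \<in> EW}"

definition is_basis_of :: "('k::field \<Rightarrow> 'v::ab_group_add \<Rightarrow> 'v) \<Rightarrow> 'v set \<Rightarrow> 'v set \<Rightarrow> bool" where
  "is_basis_of sc E B \<longleftrightarrow> B \<subseteq> E \<and> \<not> module.dependent sc B \<and> module.span sc B = E"

definition direct_sum_decomp :: "'v::ab_group_add set \<Rightarrow> 'v set \<Rightarrow> 'v set \<Rightarrow> bool" where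
  "direct_sum_decomp X Y Z \<longleftrightarrow> X = {y + z | y z. y \<in> Y \<and> z \<in> Z} \<and> Y \<inter> Z = {0}"

definition finite_dim :: "('k::field \<Rightarrow> 'v::ab_group_add \<Rightarrow> 'v) \<Rightarrow> bool" where
  "finite_dim sc \<longleftrightarrow> (\<exists>B. finite B \<and> module.span sc B = UNIV)"

definition finite_dim_subspace :: "('k::field \<Rightarrow> 'v::ab_group_add \<Rightarrow> 'v) \<Rightarrow> 'v set \<Rightarrow> bool" where
  "finite_dim_subspace sc E \<longleftrightarrow> (\<exists>B. finite B \<and> B \<subseteq> E \<and> module.span sc B = E)"

definition alg_fin_gen :: "('k::field \<Rightarrow> 'a::ab_group_add \<Rightarrow> 'a) \<Rightarrow> ('a \<Rightarrow> 'a \<Rightarrow> 'a) \<Rightarrow> bool" where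
  "alg_fin_gen sk m \<longleftrightarrow> (\<exists>G. finite G \<and>
     (\<forall>U. module.subspace sk U \<and> G \<subseteq> U \<and> (\<forall>x\<in>U. \<forall>y\<in>U. m x y \<in> U) \<longrightarrow> U = UNIV))"

definition unital_alg :: "('a \<Rightarrow> 'a \<Rightarrow> 'a) \<Rightarrow> bool" where
  "unital_alg m \<longleftrightarrow> (\<exists>e. \<forall>x. m e x = x \<and> m x e = x)"

definition fin_gen_module :: "('a \<Rightarrow> 'a::comm_monoid_add) set \<Rightarrow> bool" where
  "fin_gen_module M \<longleftrightarrow> (\<exists>G. finite G \<and> (\<forall>x. \<exists>\<gamma>. (\<forall>g\<in>G. \<gamma> g \<in> M) \<and> x = (\<Sum>g\<in>G. \<gamma> g g)))"

definition pfgc :: "('k::field \<Rightarrow> 'a::ab_group_add \<Rightarrow> 'a) \<Rightarrow> ('a \<Rightarrow> 'a \<Rightarrow> 'a) \<Rightarrow> bool" where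
  "pfgc sk m \<longleftrightarrow> (\<exists>x::'a. x \<noteq> 0) \<and> perfect sk m \<and> fin_gen_module (centroid sk m)"

(* formula ( * ): D(A\<otimes>S) = D(A) <-\<otimes> S \<oplus> C(A) ->\<otimes> D(S), for every basis of C(A) *)
definition star_decomp ::
  "('k::field \<Rightarrow> 'a::ab_group_add \<Rightarrow> 'a) \<Rightarrow> ('a \<Rightarrow> 'a \<Rightarrow> 'a) \<Rightarrow> ('k \<Rightarrow> 's::comm_ring_1 \<Rightarrow> 's)
    \<Rightarrow> ('k \<Rightarrow> 't::ab_group_add \<Rightarrow> 't) \<Rightarrow> ('a \<Rightarrow> 's \<Rightarrow> 't) \<Rightarrow> ('t \<Rightarrow> 't \<Rightarrow> 't) \<Rightarrow> bool" where
  "star_decomp sA mA sS sT tn mT \<longleftrightarrow>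
     (\<forall>B. is_basis_of (fscale sA) (centroid sA mA) B \<longrightarrow>
        direct_sum_decomp (derivations sT mT)
          (left_tensor sT tn (derivations sA mA) (range (\<lambda>s. (*) s)))
          (right_tensor sT tn B (derivations sS (*))))"

definition plain_decomp ::
  "('k::field \<Rightarrow> 'a::ab_group_add \<Rightarrow> 'a) \<Rightarrow> ('a \<Rightarrow> 'a \<Rightarrow> 'a) \<Rightarrow> ('k \<Rightarrow> 's::comm_ring_1 \<Rightarrow> 's)
    \<Rightarrow> ('k \<Rightarrow> 't::ab_group_add \<Rightarrow> 't) \<Rightarrow> ('a \<Rightarrow> 's \<Rightarrow> 't) \<Rightarrow> ('t \<Rightarrow> 't \<Rightarrow> 't) \<Rightarrow> bool" where
  "plain_decomp sA mA sS sT tn mT \<longleftrightarrow>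
     direct_sum_decomp (derivations sT mT)
       (plain_tensor sT tn (derivations sA mA) (range (\<lambda>s. (*) s)))
       (plain_tensor sT tn (centroid sA mA) (derivations sS (*)))"

end

(*
  A derivation d of T = A \<otimes> S is split into two parts. Expanding d (a \<otimes> 1) in a basis {j} of S
  gives derivations f\<^sub>j of A, and the summable family \<Sum> f\<^sub>j \<otimes> L\<^sub>j is a derivation that
  agrees with d on A \<otimes> 1. The remainder d' vanishes on A \<otimes> 1, so d' (a \<otimes> s) is the commutator
  [d', 1 \<otimes> L\<^sub>s] applied to a \<otimes> 1. That commutator lies in the centroid of T. If \<psi> is onto, or under
  the finiteness conditions (where the perfectness of A lets one compute a centroid element of T from its
  values on products), every centroid element of T is a finite sum \<Sum> b \<otimes> L\<^sub>\<sigma>\<^sub>b, with b ranging over a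
  basis of C(A). The coefficients \<sigma>\<^sub>b are unique, and the Leibniz rule for d' makes s \<mapsto> \<sigma>\<^sub>b(s)
  a derivation c\<^sub>b of S with d' = \<Sum> b \<otimes> c\<^sub>b. The sum is direct because an element of both
  summands commutes with every 1 \<otimes> L\<^sub>s and vanishes on A \<otimes> 1. Under the stronger hypotheses a
  finite set separates D(A), C(A) or D(S), so the families f and c have finite support.
*)

theory Submission
  imports Defs
begin

lemma vector_space_fscale:
  "vector_space sc \<Longrightarrow> vector_space (fscale sc :: 'k::field \<Rightarrow> ('u \<Rightarrow> 'v::ab_group_add) \<Rightarrow> _)"
  unfolding vector_space_def fscale_def by (auto simp: fun_eq_iff)

lemma vector_space_field_mult: "vector_space ((*) :: 'k::field \<Rightarrow> 'k \<Rightarrow> 'k)"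
  by unfold_locales (auto simp: algebra_simps)

lemma sum_fun_apply: "(\<Sum>i\<in>I. (F i :: 'u \<Rightarrow> 'v::comm_monoid_add)) x = (\<Sum>i\<in>I. F i x)"
  by (induction I rule: infinite_finite_induct) auto

lemma fscale_sum_apply: "(\<Sum>i\<in>I. fscale sc (r i) (F i)) x = (\<Sum>i\<in>I. sc (r i) (F i x))"
  by (simp add: sum_fun_apply fscale_def)

lemma vs_linearD:
  assumes "Vector_Spaces.linear s1 s2 f"
  shows "f (x + y) = f x + f y" "f (s1 c x) = s2 c (f x)" "f 0 = 0"
    "f (sum g I) = (\<Sum>i\<in>I. f (g i))" "f (x - y) = f x - f y" "f (- x) = - f x"
  using module_hom_linearI[OF assms]
  by (simp_all add: module_hom.add module_hom.scale module_hom.zero module_hom.sum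
      module_hom.diff module_hom.neg)

lemma vs_linearI:
  assumes "vector_space s1" "vector_space s2"
    and "\<And>x y. f (x + y) = f x + f y" "\<And>c x. f (s1 c x) = s2 c (f x)"
  shows "Vector_Spaces.linear s1 s2 f"
  using assms by (auto simp: Vector_Spaces.linear_iff)

lemma vs_linear_zero: "vector_space s1 \<Longrightarrow> vector_space s2 \<Longrightarrow> Vector_Spaces.linear s1 s2 (\<lambda>_. 0)"
  using vector_space_pair.linear_zero[of s1 s2] by (simp add: vector_space_pair_def)

lemma fam_sum_eq_sum:
  assumes "finite W" "{i\<in>I. F i v \<noteq> 0} \<subseteq> W" "W \<subseteq> I"
  shows "fam_sum I F v = (\<Sum>i\<in>W. F i v)"
  unfolding fam_sum_def using assms by (intro sum.mono_neutral_left) auto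

lemma fam_sum_finite: "finite I \<Longrightarrow> fam_sum I F = (\<Sum>i\<in>I. F i)"
  by (rule ext, subst fam_sum_eq_sum[of I]) (auto simp: sum_fun_apply)

lemma independent_finite_if_finite_dim_subspace:
  assumes "vector_space sc" "finite_dim_subspace sc E" "B \<subseteq> E" "\<not> module.dependent sc B"
  shows "finite B"
  using assms vector_space.independent_span_bound unfolding finite_dim_subspace_def by metis

lemma bilinear_on_UNIV_linear:
  assumes "bilinear_on sv UNIV sw su b" "vector_space sv" "vector_space su"
  shows "Vector_Spaces.linear sw su (b a)" "Vector_Spaces.linear sv su (\<lambda>x. b x w)"
  using assms by (auto simp: bilinear_on_def intro!: vs_linearI)

lemma bilinear_on_UNIV_simps:
  assumes "bilinear_on sv UNIV sw su b" "vector_space sv" "vector_space su"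
  shows "b (x + y) w = b x w + b y w" "b a (x' + y') = b a x' + b a y'"
    "b (sv c x) w = su c (b x w)" "b a (sw c x') = su c (b a x')"
    "b 0 w = 0" "b a 0 = 0" "b (x - y) w = b x w - b y w" "b a (x' - y') = b a x' - b a y'"
    "b (sum g I) w = (\<Sum>i\<in>I. b (g i) w)" "b a (sum g' I) = (\<Sum>i\<in>I. b a (g' i))"
  using vs_linearD[OF bilinear_on_UNIV_linear(1)[OF assms]]
    vs_linearD[OF bilinear_on_UNIV_linear(2)[OF assms]] by simp_all

lemma is_algebraD:
  assumes "is_algebra sk m"
  shows "vector_space sk" "bilinear_on sk UNIV sk sk m"
  using assms by (simp_all add: is_algebra_def)

lemma is_algebra_bilinear:
  assumes "is_algebra sk m"
  shows "m (x + y) z = m x z + m y z" "m z (x + y) = m z x + m z y"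
    "m (sk c x) z = sk c (m x z)" "m z (sk c x) = sk c (m z x)"
    "m 0 z = 0" "m z 0 = 0" "m (x - y) z = m x z - m y z" "m z (x - y) = m z x - m z y"
    "m (sum g I) z = (\<Sum>i\<in>I. m (g i) z)" "m z (sum g I) = (\<Sum>i\<in>I. m z (g i))"
  using bilinear_on_UNIV_simps[OF is_algebraD(2)[OF assms] is_algebraD(1)[OF assms]
      is_algebraD(1)[OF assms]] by simp_all

lemma is_algebra_comm_ring:
  assumes "vector_space sS" "\<forall>c x y. sS c (x * y) = sS c x * y"
  shows "is_algebra sS ((*) :: 's::comm_ring_1 \<Rightarrow> 's \<Rightarrow> 's)"
  unfolding is_algebra_def bilinear_on_def
proof (intro conjI assms allI ballI)
  show "Vector_Spaces.linear sS sS ((*) s)" for s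
  proof (rule vs_linearI)
    show "s * sS c x = sS c (s * x)" for c x
      using assms(2) by (metis mult.commute)
  qed (use assms(1) in \<open>auto simp: algebra_simps\<close>)
qed (simp_all add: distrib_right assms(2))

lemma derivationD:
  assumes "d \<in> derivations sk m"
  shows "Vector_Spaces.linear sk sk d" "d (m x y) = m (d x) y + m x (d y)"
  using assms unfolding derivations_def by auto

lemma centroidD:
  assumes "\<gamma> \<in> centroid sk m"
  shows "Vector_Spaces.linear sk sk \<gamma>" "\<gamma> (m x y) = m (\<gamma> x) y" "\<gamma> (m x y) = m x (\<gamma> y)"
  using assms unfolding centroid_def by blast+

lemma derivation_one:
  "d \<in> derivations sk ((*) :: 's::ring_1 \<Rightarrow> 's \<Rightarrow> 's) \<Longrightarrow> d 1 = 0"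
  using derivationD(2)[of d sk "(*)" 1 1] by simp

lemma zero_in_derivations:
  assumes "is_algebra sk m"
  shows "0 \<in> derivations sk m"
  unfolding derivations_def zero_fun_def
  by (auto intro!: vs_linear_zero is_algebraD(1)[OF assms] simp: is_algebra_bilinear[OF assms])

lemma derivations_subspace:
  fixes sk :: "'k::field \<Rightarrow> 'a::ab_group_add \<Rightarrow> 'a"
  assumes "is_algebra sk m"
  shows "module.subspace (fscale sk) (derivations sk m)"
proof -
  interpret vector_space sk using is_algebraD(1)[OF assms] .
  interpret F: vector_space "fscale sk :: _ \<Rightarrow> ('a \<Rightarrow> 'a) \<Rightarrow> _"
    by (rule vector_space_fscale) unfold_locales
  note m = is_algebra_bilinear[OF assms]
  have "x + y \<in> derivations sk m" if "x \<in> derivations sk m" "y \<in> derivations sk m" for x y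
    using that unfolding derivations_def
    by (auto intro!: vs_linearI simp: vector_space_axioms vs_linearD m scale_right_distrib)
  moreover have "fscale sk c x \<in> derivations sk m" if "x \<in> derivations sk m" for c x
    using that unfolding derivations_def fscale_def
    by (auto intro!: vs_linearI simp: vector_space_axioms vs_linearD m scale_right_distrib)
  ultimately show ?thesis unfolding F.subspace_def using zero_in_derivations[OF assms] by blast
qed

lemma centroid_subspace:
  fixes sk :: "'k::field \<Rightarrow> 'a::ab_group_add \<Rightarrow> 'a"
  assumes "is_algebra sk m"
  shows "module.subspace (fscale sk) (centroid sk m)"
proof -
  interpret vector_space sk using is_algebraD(1)[OF assms] .
  interpret F: vector_space "fscale sk :: _ \<Rightarrow> ('a \<Rightarrow> 'a) \<Rightarrow> _"
    by (rule vector_space_fscale) unfold_locales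
  note m = is_algebra_bilinear[OF assms]
  have "x + y \<in> centroid sk m" if x: "x \<in> centroid sk m" and y: "y \<in> centroid sk m" for x y
  proof -
    have "Vector_Spaces.linear sk sk (x + y)"
      by (auto intro!: vs_linearI simp: vector_space_axioms vs_linearD[OF centroidD(1)[OF x]]
          vs_linearD[OF centroidD(1)[OF y]] scale_right_distrib)
    moreover have "(x + y) (m a b) = m ((x + y) a) b" for a b
      by (simp add: m centroidD(2)[OF x] centroidD(2)[OF y])
    moreover have "(x + y) (m a b) = m a ((x + y) b)" for a b
      by (simp add: m centroidD(3)[OF x] centroidD(3)[OF y])
    ultimately show ?thesis unfolding centroid_def by auto
  qed
  moreover have "fscale sk c x \<in> centroid sk m" if x: "x \<in> centroid sk m" for c x
  proof -
    have "Vector_Spaces.linear sk sk (fscale sk c x)"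
      by (auto intro!: vs_linearI simp: fscale_def vector_space_axioms vs_linearD[OF centroidD(1)[OF x]]
          scale_right_distrib)
    moreover have "fscale sk c x (m a b) = m (fscale sk c x a) b" for a b
      by (simp add: fscale_def m centroidD(2)[OF x])
    moreover have "fscale sk c x (m a b) = m a (fscale sk c x b)" for a b
      by (simp add: fscale_def m centroidD(3)[OF x])
    ultimately show ?thesis unfolding centroid_def by auto
  qed
  moreover have "0 \<in> centroid sk m"
    unfolding centroid_def zero_fun_def by (auto intro!: vs_linear_zero vector_space_axioms simp: m)
  ultimately show ?thesis unfolding F.subspace_def by blast
qed

lemma perfect_induct [consumes 2, case_names mult zero add scale]:
  assumes "vector_space sk" "perfect sk m"
    and "\<And>x y. P (m x y)" "P 0" "\<And>x y. P x \<Longrightarrow> P y \<Longrightarrow> P (x + y)" "\<And>c x. P x \<Longrightarrow> P (sk c x)"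
  shows "P a"
proof -
  interpret vector_space sk by fact
  have "a \<in> span {m x y | x y. True}" using assms(2) unfolding perfect_def by auto
  then show ?thesis
    by (induction rule: span_induct) (use assms(3-) in \<open>auto simp: subspace_def\<close>)
qed

lemma centroid_commute:
  assumes "is_algebra sk m" "perfect sk m" and \<gamma>: "\<gamma> \<in> centroid sk m" and \<delta>: "\<delta> \<in> centroid sk m"
  shows "\<gamma> (\<delta> x) = \<delta> (\<gamma> x)"
  using is_algebraD(1)[OF assms(1)] assms(2)
proof (induction x rule: perfect_induct)
  case (mult a b)
  have "\<gamma> (\<delta> (m a b)) = m (\<delta> a) (\<gamma> b)" by (simp only: centroidD(2)[OF \<delta>] centroidD(3)[OF \<gamma>])
  also have "\<dots> = \<delta> (\<gamma> (m a b))" by (simp only: centroidD(2)[OF \<delta>] centroidD(3)[OF \<gamma>])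
  finally show ?case .
qed (simp_all add: vs_linearD[OF centroidD(1)[OF \<gamma>]] vs_linearD[OF centroidD(1)[OF \<delta>]])

lemma commutator_in_centroid:
  assumes "is_algebra sk m" and d: "d \<in> derivations sk m" and X: "X \<in> centroid sk m"
  shows "(\<lambda>x. d (X x) - X (d x)) \<in> centroid sk m"
proof -
  interpret vector_space sk using is_algebraD(1)[OF assms(1)] .
  note m = is_algebra_bilinear[OF assms(1)]
  have "Vector_Spaces.linear sk sk (\<lambda>x. d (X x) - X (d x))"
    by (rule vs_linearI)
      (auto simp: vs_linearD[OF derivationD(1)[OF d]] vs_linearD[OF centroidD(1)[OF X]]
        vector_space_axioms scale_right_diff_distrib)
  moreover have "d (X (m x y)) - X (d (m x y)) = m (d (X x) - X (d x)) y" for x y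
    by (simp add: centroidD[OF X] derivationD[OF d] vs_linearD[OF centroidD(1)[OF X]] m)
  moreover have "d (X (m x y)) - X (d (m x y)) = m x (d (X y) - X (d y))" for x y
  proof -
    have "X (d (m x y)) = m (d x) (X y) + m x (X (d y))"
      by (simp add: derivationD[OF d] vs_linearD[OF centroidD(1)[OF X]] centroidD(3)[OF X])
    then show ?thesis by (simp add: centroidD(3)[OF X] derivationD[OF d] m)
  qed
  ultimately show ?thesis unfolding centroid_def by auto
qed

lemma fam_sum_linear:
  assumes "vector_space s1" "vector_space s2"
    and lin: "\<And>i. i \<in> I \<Longrightarrow> Vector_Spaces.linear s1 s2 (F i)" and sm: "fam_summable I F"
  shows "Vector_Spaces.linear s1 s2 (fam_sum I F)"
proof -
  let ?S = "\<lambda>v. {i\<in>I. F i v \<noteq> 0}"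
  have fs: "fam_sum I F v = (\<Sum>i\<in>W. F i v)" if "finite W" "?S v \<subseteq> W" "W \<subseteq> I" for v W
    using fam_sum_eq_sum[of W I F v, OF that] .
  have fin: "finite (?S v)" for v using sm unfolding fam_summable_def by auto
  show ?thesis
  proof (rule vs_linearI[OF assms(1,2)])
    fix x y
    let ?W = "?S x \<union> ?S y \<union> ?S (x + y)"
    have "fam_sum I F (x + y) = (\<Sum>i\<in>?W. F i x + F i y)"
      by (subst fs[of ?W]) (auto simp: fin vs_linearD[OF lin] intro!: sum.cong)
    also have "\<dots> = fam_sum I F x + fam_sum I F y"
      unfolding sum.distrib by (subst (1 2) fs[of ?W]) (auto simp: fin)
    finally show "fam_sum I F (x + y) = fam_sum I F x + fam_sum I F y" .
  next
    fix c x
    let ?W = "?S x \<union> ?S (s1 c x)"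
    have "fam_sum I F (s1 c x) = (\<Sum>i\<in>?W. s2 c (F i x))"
      by (subst fs[of ?W]) (auto simp: fin vs_linearD[OF lin] intro!: sum.cong)
    also have "\<dots> = s2 c (fam_sum I F x)"
        by (subst fs[of ?W])
        (auto simp: fin module.scale_sum_right[OF assms(2)[folded module_iff_vector_space]])
    finally show "fam_sum I F (s1 c x) = s2 c (fam_sum I F x)" .
  qed
qed

lemma fam_sum_derivation:
  assumes alg: "is_algebra sk m"
    and der: "\<And>i. i \<in> I \<Longrightarrow> F i \<in> derivations sk m" and sm: "fam_summable I F"
  shows "fam_sum I F \<in> derivations sk m"
proof -
  note vs = is_algebraD(1)[OF alg]
  note m = is_algebra_bilinear[OF alg]
  let ?S = "\<lambda>v. {i\<in>I. F i v \<noteq> 0}"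
  have fs: "fam_sum I F v = (\<Sum>i\<in>W. F i v)" if "finite W" "?S v \<subseteq> W" "W \<subseteq> I" for v W
    using fam_sum_eq_sum[of W I F v, OF that] .
  have fin: "finite (?S v)" for v using sm unfolding fam_summable_def by auto
  have "fam_sum I F (m x y) = m (fam_sum I F x) y + m x (fam_sum I F y)" for x y
  proof -
    let ?W = "?S x \<union> ?S y \<union> ?S (m x y)"
    have "fam_sum I F (m x y) = (\<Sum>i\<in>?W. m (F i x) y + m x (F i y))"
      by (subst fs[of ?W]) (auto simp: fin derivationD[OF der] intro!: sum.cong)
    also have "\<dots> = m (fam_sum I F x) y + m x (fam_sum I F y)"
      unfolding sum.distrib m(9,10)[symmetric] by (subst (1 2) fs[of ?W]) (auto simp: fin)
    finally show ?thesis .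
  qed
  moreover have "Vector_Spaces.linear sk sk (fam_sum I F)"
    using fam_sum_linear[OF vs vs derivationD(1)[OF der] sm] .
  ultimately show ?thesis unfolding derivations_def by auto
qed

lemma fam_sum_commute:
  assumes "Vector_Spaces.linear s s X" and comm: "\<And>i t. i \<in> I \<Longrightarrow> F i (X t) = X (F i t)"
    and sm: "fam_summable I F"
  shows "fam_sum I F (X t) = X (fam_sum I F t)"
proof -
  let ?S = "\<lambda>v. {i\<in>I. F i v \<noteq> 0}"
  have fin: "finite (?S v)" for v using sm unfolding fam_summable_def by auto
  let ?W = "?S t \<union> ?S (X t)"
  have "fam_sum I F (X t) = (\<Sum>i\<in>?W. X (F i t))"
    by (subst fam_sum_eq_sum[of ?W]) (auto simp: fin comm intro!: sum.cong)
  also have "\<dots> = X (fam_sum I F t)"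
    by (subst fam_sum_eq_sum[of ?W]) (auto simp: vs_linearD[OF assms(1)] fin)
  finally show ?thesis .
qed

section \<open>Operator families determined on a finite set\<close>

definition finitely_determined :: "('a \<Rightarrow> 'b::zero) set \<Rightarrow> bool" where
  "finitely_determined E \<longleftrightarrow> (\<exists>G. finite G \<and> (\<forall>\<theta>\<in>E. (\<forall>g\<in>G. \<theta> g = 0) \<longrightarrow> \<theta> = 0))"

lemma finite_support_if_finitely_determined:
  assumes "finitely_determined E" "f ` I \<subseteq> E" "fam_summable I f"
  shows "finite {i\<in>I. f i \<noteq> 0}"
proof -
  obtain G where G: "finite G" "\<And>\<theta>. \<theta> \<in> E \<Longrightarrow> \<forall>g\<in>G. \<theta> g = 0 \<Longrightarrow> \<theta> = 0"
    using assms(1) unfolding finitely_determined_def by blast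
  have "{i\<in>I. f i \<noteq> 0} \<subseteq> (\<Union>g\<in>G. {i\<in>I. f i g \<noteq> 0})"
    using G(2) assms(2) by blast
  moreover have "finite (\<Union>g\<in>G. {i\<in>I. f i g \<noteq> 0})"
    using G(1) assms(3) unfolding fam_summable_def by auto
  ultimately show ?thesis by (rule finite_subset)
qed

lemma finitely_determined_if_finite_dim:
  assumes "finite_dim sk" "\<And>\<theta>. \<theta> \<in> E \<Longrightarrow> Vector_Spaces.linear sk sc \<theta>"
  shows "finitely_determined E"
  using assms module_hom.eq_0_on_span[OF module_hom_linearI]
  unfolding finitely_determined_def finite_dim_def zero_fun_def by (metis UNIV_I)

lemma finitely_determined_if_alg_fin_gen:
  assumes "alg_fin_gen sk m" and lin: "\<And>\<theta>. \<theta> \<in> E \<Longrightarrow> Vector_Spaces.linear sk sk \<theta>"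
    and mult: "\<And>\<theta> x y. \<theta> \<in> E \<Longrightarrow> \<theta> x = 0 \<Longrightarrow> \<theta> y = 0 \<Longrightarrow> \<theta> (m x y) = 0"
  shows "finitely_determined E"
proof -
  obtain G where G: "finite G"
    and gen: "\<And>U. module.subspace sk U \<Longrightarrow> G \<subseteq> U \<Longrightarrow> \<forall>x\<in>U. \<forall>y\<in>U. m x y \<in> U \<Longrightarrow> U = UNIV"
    using assms(1) unfolding alg_fin_gen_def by blast
  have "\<theta> = 0" if \<theta>: "\<theta> \<in> E" "\<forall>g\<in>G. \<theta> g = 0" for \<theta>
  proof -
    have "{x. \<theta> x = 0} = UNIV"
    proof (rule gen)
      show "module.subspace sk {x. \<theta> x = 0}"
        by (rule module_hom.subspace_kernel[OF module_hom_linearI[OF lin[OF \<theta>(1)]]])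
    qed (use mult[OF \<theta>(1)] \<theta>(2) in auto)
    then show ?thesis by (auto simp: fun_eq_iff)
  qed
  then show ?thesis unfolding finitely_determined_def using G by blast
qed

lemma centroid_finitely_determined_if_alg_fin_gen:
  assumes "is_algebra sk m" "alg_fin_gen sk m"
  shows "finitely_determined (centroid sk m)"
proof (rule finitely_determined_if_alg_fin_gen[OF assms(2)])
  fix \<theta> x y assume \<theta>: "\<theta> \<in> centroid sk m" and "\<theta> x = 0"
  then show "\<theta> (m x y) = 0" using centroidD(2)[OF \<theta>] is_algebra_bilinear(5)[OF assms(1)] by simp
qed (rule centroidD(1))

lemma derivations_finitely_determined_if_alg_fin_gen:
  assumes "is_algebra sk m" "alg_fin_gen sk m"
  shows "finitely_determined (derivations sk m)"
proof (rule finitely_determined_if_alg_fin_gen[OF assms(2)])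
  fix \<theta> x y assume \<theta>: "\<theta> \<in> derivations sk m" and "\<theta> x = 0" "\<theta> y = 0"
  then show "\<theta> (m x y) = 0" using derivationD(2)[OF \<theta>] is_algebra_bilinear(5,6)[OF assms(1)] by simp
qed (rule derivationD(1))

lemma centroid_finitely_determined_if_unital:
  assumes "is_algebra sk m" "unital_alg m"
  shows "finitely_determined (centroid sk m)"
proof -
  obtain e where e: "\<And>x. m e x = x" using assms(2) unfolding unital_alg_def by blast
  have "\<gamma> x = 0" if "\<gamma> \<in> centroid sk m" "\<gamma> e = 0" for \<gamma> x
    using centroidD(2)[OF that(1), of e x] e that(2) is_algebra_bilinear(5)[OF assms(1)] by simp
  then show ?thesis unfolding finitely_determined_def
    by (intro exI[of _ "{e}"]) (auto simp: fun_eq_iff)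
qed

lemma finitely_determined_if_fin_gen_module:
  assumes "fin_gen_module M" and M0: "\<And>\<gamma>. \<gamma> \<in> M \<Longrightarrow> \<gamma> 0 = 0"
    and lin: "\<And>\<theta>. \<theta> \<in> E \<Longrightarrow> Vector_Spaces.linear sk sk \<theta>"
    and comm: "\<And>\<theta> \<gamma>. \<theta> \<in> E \<Longrightarrow> \<gamma> \<in> M \<Longrightarrow> \<theta> \<circ> \<gamma> = \<gamma> \<circ> \<theta>"
  shows "finitely_determined E"
proof -
  obtain G where G: "finite G" "\<And>x. \<exists>\<gamma>. (\<forall>g\<in>G. \<gamma> g \<in> M) \<and> x = (\<Sum>g\<in>G. \<gamma> g g)"
    using assms(1) unfolding fin_gen_module_def by blast
  have "\<theta> x = 0" if \<theta>: "\<theta> \<in> E" and z: "\<forall>g\<in>G. \<theta> g = 0" for \<theta> x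
  proof -
    obtain \<gamma> where \<gamma>: "\<forall>g\<in>G. \<gamma> g \<in> M" "x = (\<Sum>g\<in>G. \<gamma> g g)" using G(2) by blast
    have "\<theta> (\<gamma> g g) = \<gamma> g (\<theta> g)" if "g \<in> G" for g
      using comm[OF \<theta>, of "\<gamma> g"] \<gamma>(1) that by (metis comp_apply)
    also have "\<dots> g = 0" if "g \<in> G" for g using M0 \<gamma>(1) z that by simp
    finally show ?thesis using \<gamma>(2) by (simp add: vs_linearD(4)[OF lin[OF \<theta>]])
  qed
  then show ?thesis unfolding finitely_determined_def using G(1) by (auto simp: fun_eq_iff)
qed

lemma finite_dim_subspace_if_finite_dim:
  fixes sk :: "'k::field \<Rightarrow> 'a::ab_group_add \<Rightarrow> 'a"
  assumes "vector_space sk" "finite_dim sk" "module.subspace (fscale sk) E"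
    and lin: "\<And>f. f \<in> E \<Longrightarrow> Vector_Spaces.linear sk sk f"
  shows "finite_dim_subspace (fscale sk) E"
proof -
  interpret vector_space sk by fact
  interpret F: vector_space "fscale sk :: _ \<Rightarrow> ('a \<Rightarrow> 'a) \<Rightarrow> _"
    by (rule vector_space_fscale) unfold_locales
  obtain U where U: "finite U" "span U = UNIV" using assms(2) unfolding finite_dim_def by blast
  have "\<exists>k. x = (\<Sum>u\<in>U. sk (k u) u)" for x using span_finite[OF U(1)] U(2) by auto
  then obtain \<kappa> where \<kappa>: "\<And>x. x = (\<Sum>u\<in>U. sk (\<kappa> x u) u)" by metis
  define e where "e p = (\<lambda>x. sk (\<kappa> x (fst p)) (snd p))" for p
  have "f \<in> F.span (e ` (U \<times> U))" if "f \<in> E" for f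
  proof -
    have "f x = (\<Sum>p\<in>U \<times> U. fscale sk (\<kappa> (f (fst p)) (snd p)) (e p)) x" for x
    proof -
      have "f x = f (\<Sum>u\<in>U. sk (\<kappa> x u) u)" by (rule arg_cong[OF \<kappa>])
      also have "\<dots> = (\<Sum>u\<in>U. sk (\<kappa> x u) (f u))" by (simp add: vs_linearD[OF lin[OF that]])
      also have "\<dots> = (\<Sum>u\<in>U. sk (\<kappa> x u) (\<Sum>v\<in>U. sk (\<kappa> (f u) v) v))"
        by (rule sum.cong[OF refl], rule arg_cong[OF \<kappa>])
      also have "\<dots> = (\<Sum>p\<in>U \<times> U. sk (\<kappa> (f (fst p)) (snd p)) (sk (\<kappa> x (fst p)) (snd p)))"
        by (simp add: scale_sum_right sum.cartesian_product case_prod_beta mult.commute)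
      also have "\<dots> = (\<Sum>p\<in>U \<times> U. fscale sk (\<kappa> (f (fst p)) (snd p)) (e p)) x"
        by (simp add: fscale_sum_apply e_def)
      finally show ?thesis .
    qed
    then have "f = (\<Sum>p\<in>U \<times> U. fscale sk (\<kappa> (f (fst p)) (snd p)) (e p))" by (rule ext)
    also have "\<dots> \<in> F.span (e ` (U \<times> U))"
      by (intro F.span_sum F.span_scale F.span_base) auto
    finally show ?thesis .
  qed
  then have E: "E \<subseteq> F.span (e ` (U \<times> U))" by blast
  obtain B where B: "B \<subseteq> E" "F.independent B" "E \<subseteq> F.span B"
    using F.basis_exists[of E] by metis
  have "finite B"
    using F.independent_span_bound[OF _ B(2)] B(1) E U(1) by (meson finite_SigmaI finite_imageI order_trans)
  moreover have "F.span B = E" using B(3) F.span_minimal[OF B(1) assms(3)] by (rule antisym[rotated])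
  ultimately show ?thesis unfolding finite_dim_subspace_def using B(1) by blast
qed

lemma centroid_finitely_determined_if_fin_gen_module:
  assumes "is_algebra sk m" "perfect sk m" "fin_gen_module M" "M \<subseteq> centroid sk m"
  shows "finitely_determined (centroid sk m)"
  using assms(3)
proof (rule finitely_determined_if_fin_gen_module)
  show "\<gamma> 0 = 0" if "\<gamma> \<in> M" for \<gamma>
    using vs_linearD(3)[OF centroidD(1)] assms(4) that by blast
  show "\<theta> \<circ> \<gamma> = \<gamma> \<circ> \<theta>" if "\<theta> \<in> centroid sk m" "\<gamma> \<in> M" for \<theta> \<gamma>
    using centroid_commute[OF assms(1,2) that(1)] assms(4) that(2) by (auto simp: fun_eq_iff)
qed (rule centroidD(1))

lemma derivations_finitely_determined_if_fin_gen_module: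
  assumes "fin_gen_module M" "M \<subseteq> centroid sk m"
    and "\<And>d \<gamma>. d \<in> derivations sk m \<Longrightarrow> \<gamma> \<in> M \<Longrightarrow> d \<circ> \<gamma> = \<gamma> \<circ> d"
  shows "finitely_determined (derivations sk m)"
  using assms(1)
proof (rule finitely_determined_if_fin_gen_module)
  show "\<gamma> 0 = 0" if "\<gamma> \<in> M" for \<gamma>
    using vs_linearD(3)[OF centroidD(1)] assms(2) that by blast
qed (use assms(3) derivationD(1) in blast)+

lemma centroid_derivations_finitely_determined:
  assumes alg: "is_algebra sk m" and perf: "perfect sk m"
    and "alg_fin_gen sk m \<or>
      (fin_gen_module (centroid sk m) \<and> (\<forall>d \<in> derivations sk m. \<forall>\<gamma> \<in> centroid sk m. d \<circ> \<gamma> = \<gamma> \<circ> d)) \<or>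
      fin_gen_module (dcentroid sk m)"
  shows "finitely_determined (centroid sk m) \<and> finitely_determined (derivations sk m)"
  using assms(3)
proof (elim disjE conjE)
  assume "alg_fin_gen sk m"
  then show ?thesis
    using centroid_finitely_determined_if_alg_fin_gen derivations_finitely_determined_if_alg_fin_gen alg
    by blast
next
  assume "fin_gen_module (centroid sk m)"
    and "\<forall>d \<in> derivations sk m. \<forall>\<gamma> \<in> centroid sk m. d \<circ> \<gamma> = \<gamma> \<circ> d"
  then show ?thesis
    using centroid_finitely_determined_if_fin_gen_module[OF alg perf]
      derivations_finitely_determined_if_fin_gen_module by blast
next
  assume "fin_gen_module (dcentroid sk m)"
  moreover have "dcentroid sk m \<subseteq> centroid sk m" unfolding dcentroid_def by blast
  moreover have "d \<circ> \<gamma> = \<gamma> \<circ> d" if "d \<in> derivations sk m" "\<gamma> \<in> dcentroid sk m" for d \<gamma>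
    using that unfolding dcentroid_def by auto
  ultimately show ?thesis
    using centroid_finitely_determined_if_fin_gen_module[OF alg perf]
      derivations_finitely_determined_if_fin_gen_module by blast
qed

section \<open>Coordinates in the tensor product algebra\<close>

locale tensor_algebra = vA: vector_space sA + vS: vector_space sS + vT: vector_space sT
  for sA :: "'k::field \<Rightarrow> 'a::ab_group_add \<Rightarrow> 'a" and mA :: "'a \<Rightarrow> 'a \<Rightarrow> 'a"
    and sS :: "'k \<Rightarrow> 's::comm_ring_1 \<Rightarrow> 's"
    and sT :: "'k \<Rightarrow> 't::ab_group_add \<Rightarrow> 't" and tn :: "'a \<Rightarrow> 's \<Rightarrow> 't" and mT :: "'t \<Rightarrow> 't \<Rightarrow> 't" +
  assumes A_alg: "is_algebra sA mA"
    and A_perfect: "perfect sA mA"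
    and S_alg: "\<forall>c x y. sS c (x * y) = sS c x * y"
    and T_tensor: "is_tensor_product sA UNIV sS sT tn"
    and T_alg: "is_algebra sT mT"
    and T_mult: "\<forall>a b s t. mT (tn a s) (tn b t) = tn (mA a b) (s * t)"
begin

sublocale fA: vector_space "fscale sA :: 'k \<Rightarrow> ('a \<Rightarrow> 'a) \<Rightarrow> ('a \<Rightarrow> 'a)"
  by (rule vector_space_fscale[OF vA.vector_space_axioms])

sublocale fT: vector_space "fscale sT :: 'k \<Rightarrow> ('t \<Rightarrow> 't) \<Rightarrow> ('t \<Rightarrow> 't)"
  by (rule vector_space_fscale[OF vT.vector_space_axioms])

lemma tn_bilinear: "bilinear_on sA UNIV sS sT tn"
  using T_tensor unfolding is_tensor_product_def by blast

lemmas tn_simps = bilinear_on_UNIV_simps[OF tn_bilinear vA.vector_space_axioms vT.vector_space_axioms]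
lemmas mA_simps = is_algebra_bilinear[OF A_alg]
lemmas mT_simps = is_algebra_bilinear[OF T_alg]

lemma S_is_algebra: "is_algebra sS (*)"
  by (rule is_algebra_comm_ring[OF vS.vector_space_axioms S_alg])

lemmas S_simps = is_algebra_bilinear[OF S_is_algebra]

lemma mult_linear: "Vector_Spaces.linear sS sS ((*) s)"
  using bilinear_on_UNIV_linear(1)[OF is_algebraD(2)[OF S_is_algebra]] vS.vector_space_axioms by blast

lemma mT_tn: "mT (tn a s) (tn b t) = tn (mA a b) (s * t)"
  using T_mult by blast

lemma tensor_induct [case_names tn zero add scale]:
  assumes "\<And>a s. P (tn a s)" "P 0" "\<And>x y. P x \<Longrightarrow> P y \<Longrightarrow> P (x + y)"
    "\<And>c x. P x \<Longrightarrow> P (sT c x)"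
  shows "P t"
proof -
  have "t \<in> vT.span ((\<lambda>(a, w). tn a w) ` (UNIV \<times> UNIV))"
    using T_tensor unfolding is_tensor_product_def by auto
  then show ?thesis
    by (induction rule: vT.span_induct) (use assms in \<open>auto simp: vT.subspace_def\<close>)
qed

lemma linear_eq_on_tensors:
  assumes "Vector_Spaces.linear sT sc X" "Vector_Spaces.linear sT sc Y"
    and "\<And>a s. X (tn a s) = Y (tn a s)"
  shows "X = Y"
proof
  fix t show "X t = Y t"
    by (induction t rule: tensor_induct) (simp_all add: assms vs_linearD[OF assms(1)] vs_linearD[OF assms(2)])
qed

lemma bilinear_eq_on_tensors:
  fixes F G :: "'t \<Rightarrow> 't \<Rightarrow> 'x::ab_group_add"
  assumes "\<And>x y z. F (x + y) z = F x z + F y z" "\<And>x y z. F z (x + y) = F z x + F z y"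
    "\<And>c x y. F (sT c x) y = sc c (F x y)" "\<And>c x y. F x (sT c y) = sc c (F x y)"
    "\<And>x y z. G (x + y) z = G x z + G y z" "\<And>x y z. G z (x + y) = G z x + G z y"
    "\<And>c x y. G (sT c x) y = sc c (G x y)" "\<And>c x y. G x (sT c y) = sc c (G x y)"
    and eq: "\<And>a s b t. F (tn a s) (tn b t) = G (tn a s) (tn b t)"
  shows "F x y = G x y"
proof -
  have F0: "F z 0 = 0" "F 0 z = 0" and G0: "G z 0 = 0" "G 0 z = 0" for z
    using assms(1)[of 0 0 z] assms(2)[of z 0 0] assms(5)[of 0 0 z] assms(6)[of z 0 0] by auto
  have "F (tn a s) y = G (tn a s) y" for a s
    by (induction y rule: tensor_induct) (simp_all add: eq F0 G0 assms(2,4,6,8))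
  then show ?thesis
    by (induction x rule: tensor_induct) (simp_all add: F0 G0 assms(1,3,5,7))
qed

definition S_basis :: "'s set" where
  "S_basis = (SOME J. vS.independent J \<and> vS.span J = UNIV)"

lemma S_basis: "vS.independent S_basis" "vS.span S_basis = UNIV"
proof -
  obtain B where "vS.independent B" "UNIV \<subseteq> vS.span B"
    using vS.basis_exists[of UNIV] by metis
  then have "\<exists>J. vS.independent J \<and> vS.span J = UNIV" by auto
  then show "vS.independent S_basis" "vS.span S_basis = UNIV"
    unfolding S_basis_def by (metis (mono_tags, lifting) someI_ex)+
qed

definition S_coeff :: "'s \<Rightarrow> 's \<Rightarrow> 'k" where
  "S_coeff j s = vS.representation S_basis s j"

lemma S_coeff_finite: "finite {j. S_coeff j s \<noteq> 0}"
  unfolding S_coeff_def by (rule vS.finite_representation)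

lemma S_coeff_in_basis: "S_coeff j s \<noteq> 0 \<Longrightarrow> j \<in> S_basis"
  unfolding S_coeff_def by (rule vS.representation_ne_zero)

lemma S_coeff_expand: "(\<Sum>j | S_coeff j s \<noteq> 0. sS (S_coeff j s) j) = s"
  unfolding S_coeff_def using vS.sum_nonzero_representation_eq[OF S_basis(1)] S_basis(2) by auto

lemma S_coeff_basis: "j' \<in> S_basis \<Longrightarrow> S_coeff j j' = (if j = j' then 1 else 0)"
  unfolding S_coeff_def using vS.representation_basis[OF S_basis(1)] by auto

lemma S_coeff_linear: "Vector_Spaces.linear sS (*) (S_coeff j)"
  by (rule vs_linearI)
    (auto simp: S_coeff_def vS.representation_add[OF S_basis(1)] vS.representation_scale[OF S_basis(1)]
      S_basis(2) vS.vector_space_axioms vector_space_field_mult)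

text \<open>The functionals \<open>S_coeff j\<close> separate the tensors \<open>tn a j\<close> through the universal property.\<close>

lemma tn_basis_independent:
  assumes F: "finite F" "F \<subseteq> S_basis" and eq: "(\<Sum>j\<in>F. tn (x j) j) = 0" and j0: "j0 \<in> F"
  shows "x j0 = 0"
proof (rule ccontr)
  assume nz: "x j0 \<noteq> 0"
  have "vector_space_pair sA ((*) :: 'k \<Rightarrow> 'k \<Rightarrow> 'k)"
    by (simp add: vector_space_pair_def vA.vector_space_axioms vector_space_field_mult)
  then obtain \<mu> where \<mu>: "Vector_Spaces.linear sA (*) \<mu>" "\<mu> (x j0) = 1"
    using vector_space_pair.linear_independent_extend[of sA "(*)" "{x j0}" "\<lambda>_. 1"] nz by auto
  have "bilinear_on sA UNIV sS (*) (\<lambda>a s. \<mu> a * S_coeff j0 s)"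
    unfolding bilinear_on_def
    using vs_linearD[OF \<mu>(1)] vs_linearD[OF S_coeff_linear]
    by (auto intro!: vs_linearI simp: vS.vector_space_axioms vector_space_field_mult algebra_simps)
  then obtain \<phi> where \<phi>: "Vector_Spaces.linear sT (*) \<phi>" "\<And>a s. \<phi> (tn a s) = \<mu> a * S_coeff j0 s"
    using T_tensor unfolding is_tensor_product_def by blast
  have "0 = \<phi> (\<Sum>j\<in>F. tn (x j) j)" by (simp add: eq vs_linearD[OF \<phi>(1)])
  also have "\<dots> = (\<Sum>j\<in>F. \<mu> (x j) * S_coeff j0 j)" by (simp add: vs_linearD[OF \<phi>(1)] \<phi>(2))
  also have "\<dots> = (\<Sum>j\<in>F. if j = j0 then \<mu> (x j) else 0)"
    using F by (intro sum.cong) (auto simp: S_coeff_basis)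
  also have "\<dots> = 1" using F j0 \<mu> by (simp add: sum.delta)
  finally show False by simp
qed

definition coord_rep :: "'t \<Rightarrow> ('s \<Rightarrow> 'a) \<Rightarrow> bool" where
  "coord_rep t x \<longleftrightarrow> finite {j. x j \<noteq> 0} \<and> {j. x j \<noteq> 0} \<subseteq> S_basis \<and>
     t = (\<Sum>j | x j \<noteq> 0. tn (x j) j)"

lemma sum_tn_superset:
  "finite U \<Longrightarrow> {j. x j \<noteq> 0} \<subseteq> U \<Longrightarrow> (\<Sum>j\<in>U. tn (x j) (g j)) = (\<Sum>j | x j \<noteq> 0. tn (x j) (g j))"
  by (rule sum.mono_neutral_right) (auto simp: tn_simps)

lemma coord_repI:
  assumes "finite U" "U \<subseteq> S_basis" "{j. x j \<noteq> 0} \<subseteq> U" "t = (\<Sum>j\<in>U. tn (x j) j)"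
  shows "coord_rep t x"
  unfolding coord_rep_def using assms sum_tn_superset[of U x "\<lambda>j. j"] by (auto intro: finite_subset)

lemma coord_rep_unique:
  assumes "coord_rep t x" "coord_rep t y"
  shows "x = y"
proof
  fix j
  let ?U = "{j. x j \<noteq> 0} \<union> {j. y j \<noteq> 0}"
  have U: "finite ?U" "?U \<subseteq> S_basis" using assms unfolding coord_rep_def by auto
  have "(\<Sum>i\<in>?U. tn (x i - y i) i) = (\<Sum>i\<in>?U. tn (x i) i) - (\<Sum>i\<in>?U. tn (y i) i)"
    by (simp add: tn_simps sum_subtractf)
  also have "\<dots> = 0"
    using assms U sum_tn_superset[of ?U x "\<lambda>j. j"] sum_tn_superset[of ?U y "\<lambda>j. j"]
    unfolding coord_rep_def by auto
  finally have "(\<Sum>i\<in>?U. tn (x i - y i) i) = 0" .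
  then show "x j = y j"
    using tn_basis_independent[OF U, of "\<lambda>i. x i - y i" j] by (cases "j \<in> ?U") auto
qed

lemma coord_rep_tn: "coord_rep (tn a s) (\<lambda>j. sA (S_coeff j s) a)"
proof (rule coord_repI)
  let ?U = "{j. S_coeff j s \<noteq> 0}"
  have "(\<Sum>j\<in>?U. tn (sA (S_coeff j s) a) j) = tn a (\<Sum>j\<in>?U. sS (S_coeff j s) j)"
    by (simp add: tn_simps)
  then show "tn a s = (\<Sum>j\<in>?U. tn (sA (S_coeff j s) a) j)" by (simp add: S_coeff_expand)
qed (auto simp: S_coeff_finite S_coeff_in_basis)

lemma coord_rep_exists: "\<exists>x. coord_rep t x"
proof (induction t rule: tensor_induct)
  case (tn a s)
  then show ?case using coord_rep_tn by blast
next
  case zero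
  have "coord_rep 0 (\<lambda>_. 0)" unfolding coord_rep_def by auto
  then show ?case by blast
next
  case (add t1 t2)
  then obtain x y where xy: "coord_rep t1 x" "coord_rep t2 y" by blast
  let ?U = "{j. x j \<noteq> 0} \<union> {j. y j \<noteq> 0}"
  have U: "finite ?U" "?U \<subseteq> S_basis" using xy unfolding coord_rep_def by auto
  have "coord_rep (t1 + t2) (\<lambda>j. x j + y j)"
  proof (rule coord_repI[OF U])
    show "t1 + t2 = (\<Sum>j\<in>?U. tn (x j + y j) j)"
      using xy U sum_tn_superset[of ?U x "\<lambda>j. j"] sum_tn_superset[of ?U y "\<lambda>j. j"]
      by (simp add: tn_simps sum.distrib coord_rep_def)
  qed auto
  then show ?case by blast
next
  case (scale c t)
  then obtain x where x: "coord_rep t x" by blast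
  let ?U = "{j. x j \<noteq> 0}"
  have U: "finite ?U" "?U \<subseteq> S_basis" using x unfolding coord_rep_def by auto
  have "coord_rep (sT c t) (\<lambda>j. sA c (x j))"
  proof (rule coord_repI[OF U])
    show "sT c t = (\<Sum>j\<in>?U. tn (sA c (x j)) j)"
      using x by (simp add: tn_simps vT.scale_sum_right coord_rep_def)
  qed auto
  then show ?case by blast
qed

definition coord :: "'t \<Rightarrow> 's \<Rightarrow> 'a" where
  "coord t = (SOME x. coord_rep t x)"

lemma coord_rep_coord: "coord_rep t (coord t)"
  unfolding coord_def using coord_rep_exists by (metis someI_ex)

lemma coord_eqI: "coord_rep t x \<Longrightarrow> coord t = x"
  using coord_rep_unique coord_rep_coord by blast

lemma coord_finite: "finite {j. coord t j \<noteq> 0}"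
  and coord_in_basis: "coord t j \<noteq> 0 \<Longrightarrow> j \<in> S_basis"
  and coord_expand: "t = (\<Sum>j | coord t j \<noteq> 0. tn (coord t j) j)"
  using coord_rep_coord[of t] unfolding coord_rep_def by auto

lemma coord_expand_superset:
  "finite U \<Longrightarrow> {j. coord t j \<noteq> 0} \<subseteq> U \<Longrightarrow> t = (\<Sum>j\<in>U. tn (coord t j) j)"
  using sum_tn_superset[of U "coord t" "\<lambda>j. j"] coord_expand[of t] by auto

lemma coord_tn: "coord (tn a s) j = sA (S_coeff j s) a"
  by (simp add: coord_eqI[OF coord_rep_tn])

lemma coord_linear: "Vector_Spaces.linear sT sA (\<lambda>t. coord t j)"
proof (rule vs_linearI[OF vT.vector_space_axioms vA.vector_space_axioms])
  fix t1 t2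
  let ?U = "{j. coord t1 j \<noteq> 0} \<union> {j. coord t2 j \<noteq> 0}"
  have U: "finite ?U" "?U \<subseteq> S_basis" by (auto simp: coord_finite coord_in_basis)
  have "coord_rep (t1 + t2) (\<lambda>j. coord t1 j + coord t2 j)"
  proof (rule coord_repI[OF U])
    show "t1 + t2 = (\<Sum>j\<in>?U. tn (coord t1 j + coord t2 j) j)"
      using coord_expand_superset[OF U(1), of t1] coord_expand_superset[OF U(1), of t2]
      by (simp add: tn_simps sum.distrib)
  qed auto
  then show "coord (t1 + t2) j = coord t1 j + coord t2 j" by (simp add: coord_eqI)
next
  fix c t
  let ?U = "{j. coord t j \<noteq> 0}"
  have U: "finite ?U" "?U \<subseteq> S_basis" by (auto simp: coord_finite coord_in_basis)
  have "coord_rep (sT c t) (\<lambda>j. sA c (coord t j))"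
  proof (rule coord_repI[OF U])
    have "sT c t = sT c (\<Sum>j\<in>?U. tn (coord t j) j)" by (rule arg_cong[OF coord_expand])
    then show "sT c t = (\<Sum>j\<in>?U. tn (sA c (coord t j)) j)" by (simp add: tn_simps vT.scale_sum_right)
  qed auto
  then show "coord (sT c t) j = sA c (coord t j)" by (simp add: coord_eqI)
qed

lemmas coord_simps = vs_linearD[OF coord_linear]

lemma coord_mT_tn_right: "coord (mT t (tn b 1)) j = mA (coord t j) b"
proof -
  let ?U = "{j. coord t j \<noteq> 0}"
  have "coord_rep (mT t (tn b 1)) (\<lambda>j. mA (coord t j) b)"
  proof (rule coord_repI[of ?U])
    have "mT t (tn b 1) = mT (\<Sum>j\<in>?U. tn (coord t j) j) (tn b 1)"
      using coord_expand[of t] by simp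
    then show "mT t (tn b 1) = (\<Sum>j\<in>?U. tn (mA (coord t j) b) j)"
      by (simp add: mT_simps mT_tn)
  qed (auto simp: coord_finite coord_in_basis mA_simps)
  then show ?thesis by (simp add: coord_eqI)
qed

lemma coord_mT_tn_left: "coord (mT (tn b 1) t) j = mA b (coord t j)"
proof -
  let ?U = "{j. coord t j \<noteq> 0}"
  have "coord_rep (mT (tn b 1) t) (\<lambda>j. mA b (coord t j))"
  proof (rule coord_repI[of ?U])
    have "mT (tn b 1) t = mT (tn b 1) (\<Sum>j\<in>?U. tn (coord t j) j)"
      using coord_expand[of t] by simp
    then show "mT (tn b 1) t = (\<Sum>j\<in>?U. tn (mA b (coord t j)) j)"
      by (simp add: mT_simps mT_tn)
  qed (auto simp: coord_finite coord_in_basis mA_simps)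
  then show ?thesis by (simp add: coord_eqI)
qed

section \<open>Tensor products of operators\<close>

lemma tensor_op_exists:
  assumes f: "Vector_Spaces.linear sA sA f" and g: "Vector_Spaces.linear sS sS g"
  shows "\<exists>H. Vector_Spaces.linear sT sT H \<and> (\<forall>a s. H (tn a s) = tn (f a) (g s))"
proof -
  define H where "H t = (\<Sum>j | coord t j \<noteq> 0. tn (f (coord t j)) (g j))" for t
  have H_superset: "H t = (\<Sum>j\<in>U. tn (f (coord t j)) (g j))"
    if "finite U" "{j. coord t j \<noteq> 0} \<subseteq> U" for t U
    unfolding H_def using that
    by (intro sum.mono_neutral_left) (auto simp: vs_linearD[OF f] tn_simps coord_finite)
  have "Vector_Spaces.linear sT sT H"
  proof (rule vs_linearI[OF vT.vector_space_axioms vT.vector_space_axioms])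
    fix t1 t2
    define U where "U = {j. coord t1 j \<noteq> 0} \<union> {j. coord t2 j \<noteq> 0} \<union> {j. coord (t1 + t2) j \<noteq> 0}"
    have U: "finite U" by (simp add: U_def coord_finite)
    have "H (t1 + t2) = (\<Sum>j\<in>U. tn (f (coord (t1 + t2) j)) (g j))" by (rule H_superset[OF U]) (auto simp: U_def)
    also have "\<dots> = (\<Sum>j\<in>U. tn (f (coord t1 j)) (g j)) + (\<Sum>j\<in>U. tn (f (coord t2 j)) (g j))"
      by (simp add: coord_simps vs_linearD[OF f] tn_simps sum.distrib)
    also have "\<dots> = H t1 + H t2"
    proof -
      have "{j. coord t1 j \<noteq> 0} \<subseteq> U" "{j. coord t2 j \<noteq> 0} \<subseteq> U" by (auto simp: U_def)
      then show ?thesis by (simp only: H_superset[OF U])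
    qed
    finally show "H (t1 + t2) = H t1 + H t2" .
  next
    fix c t
    define U where "U = {j. coord t j \<noteq> 0} \<union> {j. coord (sT c t) j \<noteq> 0}"
    have U: "finite U" by (simp add: U_def coord_finite)
    have "H (sT c t) = (\<Sum>j\<in>U. tn (f (coord (sT c t) j)) (g j))" by (rule H_superset[OF U]) (auto simp: U_def)
    also have "\<dots> = sT c (\<Sum>j\<in>U. tn (f (coord t j)) (g j))"
      by (simp add: coord_simps vs_linearD[OF f] tn_simps vT.scale_sum_right)
    also have "\<dots> = sT c (H t)" by (simp add: H_superset[OF U, of t] U_def)
    finally show "H (sT c t) = sT c (H t)" .
  qed
  moreover have "H (tn a s) = tn (f a) (g s)" for a s
  proof -
    let ?U = "{j. S_coeff j s \<noteq> 0}"
    have "H (tn a s) = (\<Sum>j\<in>?U. tn (f a) (g (sS (S_coeff j s) j)))"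
      by (subst H_superset[of ?U])
        (auto simp: S_coeff_finite coord_tn vs_linearD[OF f] vs_linearD[OF g] tn_simps)
    also have "\<dots> = tn (f a) (g (\<Sum>j\<in>?U. sS (S_coeff j s) j))"
      by (simp add: tn_simps vs_linearD[OF g])
    also have "\<dots> = tn (f a) (g s)" by (simp add: S_coeff_expand)
    finally show ?thesis .
  qed
  ultimately show ?thesis by blast
qed

lemma tensor_op:
  assumes "Vector_Spaces.linear sA sA f" "Vector_Spaces.linear sS sS g"
  shows tensor_op_linear: "Vector_Spaces.linear sT sT (tensor_op sT tn f g)"
    and tensor_op_tn: "tensor_op sT tn f g (tn a s) = tn (f a) (g s)"
proof -
  obtain H where H: "Vector_Spaces.linear sT sT H" "\<forall>a s. H (tn a s) = tn (f a) (g s)"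
    using tensor_op_exists[OF assms] by blast
  have "tensor_op sT tn f g = H"
    unfolding tensor_op_def
  proof (rule the_equality)
    fix h assume "Vector_Spaces.linear sT sT h \<and> (\<forall>a s. h (tn a s) = tn (f a) (g s))"
    then show "h = H" using H by (intro linear_eq_on_tensors) auto
  qed (use H in blast)
  then show "Vector_Spaces.linear sT sT (tensor_op sT tn f g)"
    "tensor_op sT tn f g (tn a s) = tn (f a) (g s)" using H by auto
qed

lemma tensor_op_zero_right:
  assumes "Vector_Spaces.linear sA sA f"
  shows "tensor_op sT tn f (\<lambda>_. 0) = (\<lambda>_. 0)"
proof -
  have z: "Vector_Spaces.linear sS sS (\<lambda>_. 0::'s)"
    by (rule vs_linear_zero[OF vS.vector_space_axioms vS.vector_space_axioms])
  show ?thesis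
    by (rule linear_eq_on_tensors[OF tensor_op_linear[OF assms z]
          vs_linear_zero[OF vT.vector_space_axioms vT.vector_space_axioms]])
      (simp add: tensor_op_tn[OF assms z] tn_simps)
qed

lemma derivation_if_on_tensors:
  assumes D: "Vector_Spaces.linear sT sT D"
    and "\<And>a s b t. D (mT (tn a s) (tn b t)) = mT (D (tn a s)) (tn b t) + mT (tn a s) (D (tn b t))"
  shows "D \<in> derivations sT mT"
proof -
  have "D (mT x y) = mT (D x) y + mT x (D y)" for x y
    by (rule bilinear_eq_on_tensors[where sc = sT])
      (simp_all add: vs_linearD[OF D] mT_simps assms(2) algebra_simps)
  then show ?thesis using D unfolding derivations_def by auto
qed

lemma centroid_if_on_tensors:
  assumes X: "Vector_Spaces.linear sT sT X"
    and "\<And>a s b t. X (mT (tn a s) (tn b t)) = mT (X (tn a s)) (tn b t)"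
    and "\<And>a s b t. X (mT (tn a s) (tn b t)) = mT (tn a s) (X (tn b t))"
  shows "X \<in> centroid sT mT"
proof -
  have "X (mT x y) = mT (X x) y" for x y
    by (rule bilinear_eq_on_tensors[where sc = sT]) (simp_all add: vs_linearD[OF X] mT_simps assms(2))
  moreover have "X (mT x y) = mT x (X y)" for x y
    by (rule bilinear_eq_on_tensors[where sc = sT]) (simp_all add: vs_linearD[OF X] mT_simps assms(3))
  ultimately show ?thesis using X unfolding centroid_def by auto
qed

definition idL :: "'s \<Rightarrow> 't \<Rightarrow> 't" where
  "idL s = tensor_op sT tn id ((*) s)"

lemma idL_linear: "Vector_Spaces.linear sT sT (idL s)"
  and idL_tn: "idL s (tn a t) = tn a (s * t)"
  unfolding idL_def using tensor_op[OF vA.linear_id mult_linear] by auto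

lemma idL_centroid: "idL s \<in> centroid sT mT"
  by (rule centroid_if_on_tensors[OF idL_linear]) (simp_all add: idL_tn mT_tn mult_ac)

lemma tensor_op_mult_commute_idL:
  assumes "Vector_Spaces.linear sA sA f"
  shows "tensor_op sT tn f ((*) \<sigma>) (idL s t) = idL s (tensor_op sT tn f ((*) \<sigma>) t)"
proof -
  note T = tensor_op[OF assms mult_linear]
  have "tensor_op sT tn f ((*) \<sigma>) \<circ> idL s = idL s \<circ> tensor_op sT tn f ((*) \<sigma>)"
    by (rule linear_eq_on_tensors[where sc = sT])
      (simp_all add: Vector_Spaces.linear_compose[OF idL_linear T(1)]
        Vector_Spaces.linear_compose[OF T(1) idL_linear] T(2) idL_tn mult_ac)
  then show ?thesis by (metis comp_apply)
qed

lemma tensor_op_derivation_mult: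
  assumes f: "f \<in> derivations sA mA"
  shows "tensor_op sT tn f ((*) s) \<in> derivations sT mT"
  using tensor_op[OF derivationD(1)[OF f] mult_linear]
  by (intro derivation_if_on_tensors) (simp_all add: mT_tn derivationD(2)[OF f] tn_simps mult_ac)

lemma tensor_op_centroid_derivation:
  assumes g: "g \<in> centroid sA mA" and d: "d \<in> derivations sS (*)"
  shows "tensor_op sT tn g d \<in> derivations sT mT"
proof -
  have "mA (g a) b = mA a (g b)" for a b using centroidD(2,3)[OF g] by metis
  then show ?thesis
    using tensor_op[OF centroidD(1)[OF g] derivationD(1)[OF d]] centroidD(2)[OF g]
    by (intro derivation_if_on_tensors) (simp_all add: mT_tn derivationD(2)[OF d] tn_simps mult_ac)
qed

lemma tensor_op_centroid_derivation_tn_1: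
  assumes "g \<in> centroid sA mA" "d \<in> derivations sS (*)"
  shows "tensor_op sT tn g d (tn a 1) = 0"
  using tensor_op_tn[OF centroidD(1)[OF assms(1)] derivationD(1)[OF assms(2)]]
    derivation_one[OF assms(2)] by (simp add: tn_simps)

lemma fam_summable_if_on_tensors:
  assumes lin: "\<And>i. i \<in> I \<Longrightarrow> Vector_Spaces.linear sT sT (F i)"
    and fin: "\<And>a s. finite {i\<in>I. F i (tn a s) \<noteq> 0}"
  shows "fam_summable I F"
  unfolding fam_summable_def
proof
  fix t show "finite {i \<in> I. F i t \<noteq> 0}"
  proof (induction t rule: tensor_induct)
    case (add x y)
    have "{i \<in> I. F i (x + y) \<noteq> 0} \<subseteq> {i \<in> I. F i x \<noteq> 0} \<union> {i \<in> I. F i y \<noteq> 0}"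
      by (auto simp: vs_linearD(1)[OF lin])
    then show ?case using add by (auto intro: finite_subset)
  next
    case (scale c x)
    have "{i \<in> I. F i (sT c x) \<noteq> 0} \<subseteq> {i \<in> I. F i x \<noteq> 0}"
      by (auto simp: vs_linearD(2)[OF lin])
    then show ?case using scale by (auto intro: finite_subset)
  qed (simp_all add: fin vs_linearD(3)[OF lin] cong: conj_cong)
qed

text \<open>Since \<open>tn a s = idL s (tn a 1)\<close>, the tensors \<open>tn a 1\<close> generate \<open>T\<close> as a module over the \<open>idL s\<close>.\<close>

lemma eq_zero_if_commute_idL:
  assumes X: "Vector_Spaces.linear sT sT X" and comm: "\<And>s t. X (idL s t) = idL s (X t)"
    and z: "\<And>a. X (tn a 1) = 0"
  shows "X = 0"
  unfolding zero_fun_def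
proof (rule linear_eq_on_tensors[OF X vs_linear_zero[OF vT.vector_space_axioms vT.vector_space_axioms]])
  fix a s
  have "X (tn a s) = X (idL s (tn a 1))" by (simp add: idL_tn)
  also have "\<dots> = 0" by (simp add: comm z vs_linearD[OF idL_linear])
  finally show "X (tn a s) = 0" .
qed

section \<open>Decomposing derivations of the tensor product\<close>

abbreviation DA_tensor_S :: "('t \<Rightarrow> 't) set" where
  "DA_tensor_S \<equiv> left_tensor sT tn (derivations sA mA) (range (\<lambda>s. (*) s))"

abbreviation CA_tensor_DS :: "('a \<Rightarrow> 'a) set \<Rightarrow> ('t \<Rightarrow> 't) set" where
  "CA_tensor_DS B \<equiv> right_tensor sT tn B (derivations sS (*))"

lemma fam_sum_tensor_op_mult:
  assumes f: "\<And>i. i \<in> I \<Longrightarrow> f i \<in> derivations sA mA" and sm: "fam_summable I f"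
  shows "fam_sum I (\<lambda>i. tensor_op sT tn (f i) ((*) (\<sigma> i))) \<in> derivations sT mT"
    and "fam_sum I (\<lambda>i. tensor_op sT tn (f i) ((*) (\<sigma> i))) (idL s t) =
      idL s (fam_sum I (\<lambda>i. tensor_op sT tn (f i) ((*) (\<sigma> i))) t)"
proof -
  note T = tensor_op[OF derivationD(1)[OF f] mult_linear]
  have smF: "fam_summable I (\<lambda>i. tensor_op sT tn (f i) ((*) (\<sigma> i)))"
  proof (rule fam_summable_if_on_tensors)
    fix a s
    have "{i \<in> I. tensor_op sT tn (f i) ((*) (\<sigma> i)) (tn a s) \<noteq> 0} \<subseteq> {i \<in> I. f i a \<noteq> 0}"
      by (auto simp: T(2) tn_simps)
    then show "finite {i \<in> I. tensor_op sT tn (f i) ((*) (\<sigma> i)) (tn a s) \<noteq> 0}"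
      using sm unfolding fam_summable_def by (auto intro: finite_subset)
  qed (rule T(1))
  show "fam_sum I (\<lambda>i. tensor_op sT tn (f i) ((*) (\<sigma> i))) \<in> derivations sT mT"
    by (rule fam_sum_derivation[OF T_alg _ smF]) (rule tensor_op_derivation_mult[OF f])
  show "fam_sum I (\<lambda>i. tensor_op sT tn (f i) ((*) (\<sigma> i))) (idL s t) =
      idL s (fam_sum I (\<lambda>i. tensor_op sT tn (f i) ((*) (\<sigma> i))) t)"
    by (rule fam_sum_commute[OF idL_linear _ smF])
      (rule tensor_op_mult_commute_idL[OF derivationD(1)[OF f]])
qed

lemma left_tensor_props:
  assumes "X \<in> DA_tensor_S"
  shows "X \<in> derivations sT mT" "X (idL s t) = idL s (X t)"
proof -
  have "\<exists>(I :: ('a \<Rightarrow> 'a) set) f g. X = fam_sum I (\<lambda>i. tensor_op sT tn (f i) (g i)) \<and>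
      f ` I \<subseteq> derivations sA mA \<and> g ` I \<subseteq> range (\<lambda>s. (*) s) \<and> fam_summable I f"
    using assms unfolding left_tensor_def by (simp only: mem_Collect_eq)
  then obtain I :: "('a \<Rightarrow> 'a) set" and f g where X: "X = fam_sum I (\<lambda>i. tensor_op sT tn (f i) (g i))"
    and f: "f ` I \<subseteq> derivations sA mA" and g: "g ` I \<subseteq> range (\<lambda>s. (*) s)" and sm: "fam_summable I f"
    by (elim exE conjE)
  define \<sigma> where "\<sigma> i = (SOME s. g i = (*) s)" for i
  have \<sigma>: "\<forall>i\<in>I. g i = (*) (\<sigma> i)"
  proof
    fix i assume "i \<in> I"
    then have "\<exists>s. g i = (*) s" using g by auto
    then show "g i = (*) (\<sigma> i)" unfolding \<sigma>_def by (rule someI_ex)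
  qed
  have "X = fam_sum I (\<lambda>i. tensor_op sT tn (f i) ((*) (\<sigma> i)))"
    unfolding X fam_sum_def using \<sigma> by (intro ext sum.cong) auto
  then show "X \<in> derivations sT mT" "X (idL s t) = idL s (X t)"
    using fam_sum_tensor_op_mult[of I f \<sigma>] f sm by auto
qed

lemma right_tensor_props:
  assumes "X \<in> CA_tensor_DS B" and B: "B \<subseteq> centroid sA mA"
  shows "X \<in> derivations sT mT" "X (tn a 1) = 0"
proof -
  obtain c where X: "X = fam_sum B (\<lambda>b. tensor_op sT tn b (c b))"
    and c: "c ` B \<subseteq> derivations sS (*)" and sm: "fam_summable B c"
    using assms unfolding right_tensor_def by blast
  have bC: "b \<in> centroid sA mA" and cD: "c b \<in> derivations sS (*)" if "b \<in> B" for b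
    using B c that by auto
  note T = tensor_op[OF centroidD(1)[OF bC] derivationD(1)[OF cD]]
  have smF: "fam_summable B (\<lambda>b. tensor_op sT tn b (c b))"
  proof (rule fam_summable_if_on_tensors)
    fix a s
    have "{b \<in> B. tensor_op sT tn b (c b) (tn a s) \<noteq> 0} \<subseteq> {b \<in> B. c b s \<noteq> 0}"
      by (auto simp: T(2) tn_simps)
    then show "finite {b \<in> B. tensor_op sT tn b (c b) (tn a s) \<noteq> 0}"
      using sm unfolding fam_summable_def by (auto intro: finite_subset)
  qed (rule T(1))
  show "X \<in> derivations sT mT"
    unfolding X by (rule fam_sum_derivation[OF T_alg _ smF]) (simp add: tensor_op_centroid_derivation bC cD)
  have "{b \<in> B. tensor_op sT tn b (c b) (tn a 1) \<noteq> 0} = {}"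
    by (auto simp: tensor_op_centroid_derivation_tn_1[OF bC cD])
  then show "X (tn a 1) = 0" unfolding X fam_sum_def by simp
qed

lemma zero_in_left_tensor: "0 \<in> DA_tensor_S"
  unfolding left_tensor_def
  by (rule CollectI, rule exI[of _ "{}"], rule exI[of _ id], rule exI[of _ "\<lambda>_. (*) 0"])
    (auto simp: fam_sum_def fam_summable_def fun_eq_iff)

lemma zero_in_right_tensor:
  assumes "B \<subseteq> centroid sA mA"
  shows "0 \<in> CA_tensor_DS B"
proof -
  have "tensor_op sT tn b (\<lambda>_. 0) = (\<lambda>_. 0)" if "b \<in> B" for b
    using tensor_op_zero_right[OF centroidD(1)] assms that by blast
  moreover have "(\<lambda>_. 0) \<in> derivations sS (*)"
    using zero_in_derivations[OF S_is_algebra] by (simp add: zero_fun_def)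
  ultimately show ?thesis
    unfolding right_tensor_def
    by (intro CollectI exI[of _ "\<lambda>_ _. 0"]) (auto simp: fam_sum_def fam_summable_def fun_eq_iff)
qed

lemma plain_left_tensor_props:
  assumes "X \<in> plain_tensor sT tn (derivations sA mA) (range (\<lambda>s. (*) s))"
  shows "X \<in> derivations sT mT" "X (idL s t) = idL s (X t)"
proof -
  have gen: "{tensor_op sT tn f g | f g. f \<in> derivations sA mA \<and> g \<in> range (\<lambda>s. (*) s)}
      \<subseteq> derivations sT mT"
    using tensor_op_derivation_mult by auto
  show "X \<in> derivations sT mT"
    using fT.span_minimal[OF gen derivations_subspace[OF T_alg]] assms unfolding plain_tensor_def by auto
  have "\<forall>s t. X (idL s t) = idL s (X t)"
    using assms unfolding plain_tensor_def
  proof (induction rule: fT.span_induct)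
    case base
    show ?case by (auto simp: fT.subspace_def vs_linearD[OF idL_linear] fscale_def)
  next
    case (step x)
    then obtain f \<sigma> where "x = tensor_op sT tn f ((*) \<sigma>)" "f \<in> derivations sA mA" by blast
    then show ?case by (simp add: tensor_op_mult_commute_idL[OF derivationD(1)])
  qed
  then show "X (idL s t) = idL s (X t)" by blast
qed

lemma plain_right_tensor_props:
  assumes "X \<in> plain_tensor sT tn (centroid sA mA) (derivations sS (*))"
  shows "X \<in> derivations sT mT" "X (tn a 1) = 0"
proof -
  have gen: "{tensor_op sT tn f g | f g. f \<in> centroid sA mA \<and> g \<in> derivations sS (*)}
      \<subseteq> derivations sT mT"
    using tensor_op_centroid_derivation by auto
  show "X \<in> derivations sT mT"
    using fT.span_minimal[OF gen derivations_subspace[OF T_alg]] assms unfolding plain_tensor_def by auto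
  have "\<forall>a. X (tn a 1) = 0"
    using assms unfolding plain_tensor_def
  proof (induction rule: fT.span_induct)
    case base
    show ?case by (auto simp: fT.subspace_def fscale_def)
  next
    case (step x)
    then obtain f g where "x = tensor_op sT tn f g" "f \<in> centroid sA mA" "g \<in> derivations sS (*)"
      by blast
    then show ?case by (simp add: tensor_op_centroid_derivation_tn_1)
  qed
  then show "X (tn a 1) = 0" by blast
qed

lemma direct_sum_decomp_derivations:
  assumes L: "\<And>X. X \<in> L \<Longrightarrow> X \<in> derivations sT mT \<and> (\<forall>s t. X (idL s t) = idL s (X t))"
    and R: "\<And>X. X \<in> R \<Longrightarrow> X \<in> derivations sT mT \<and> (\<forall>a. X (tn a 1) = 0)"
    and zero: "0 \<in> L" "0 \<in> R"
    and decomp: "\<And>d. d \<in> derivations sT mT \<Longrightarrow> \<exists>Y\<in>L. \<exists>Z\<in>R. d = Y + Z"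
  shows "direct_sum_decomp (derivations sT mT) L R"
  unfolding direct_sum_decomp_def
proof
  show "derivations sT mT = {y + z |y z. y \<in> L \<and> z \<in> R}"
  proof (intro equalityI subsetI)
    fix d assume "d \<in> derivations sT mT"
    then show "d \<in> {y + z |y z. y \<in> L \<and> z \<in> R}" using decomp by blast
  next
    fix d assume "d \<in> {y + z |y z. y \<in> L \<and> z \<in> R}"
    then obtain y z where "d = y + z" "y \<in> L" "z \<in> R" by blast
    then show "d \<in> derivations sT mT"
      using L R fT.subspace_add[OF derivations_subspace[OF T_alg]] by metis
  qed
  have "X = 0" if "X \<in> L" "X \<in> R" for X
    using L[OF that(1)] R[OF that(2)] by (intro eq_zero_if_commute_idL derivationD(1)) auto
  then show "L \<inter> R = {0}" using zero by blast
qed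

definition component :: "('t \<Rightarrow> 't) \<Rightarrow> 's \<Rightarrow> 'a \<Rightarrow> 'a" where
  "component d j a = coord (d (tn a 1)) j"

lemma component_derivation:
  assumes d: "d \<in> derivations sT mT"
  shows "component d j \<in> derivations sA mA"
proof -
  have "Vector_Spaces.linear sA sA (component d j)"
    unfolding component_def
    by (rule vs_linearI)
      (simp_all add: tn_simps vs_linearD[OF derivationD(1)[OF d]] coord_simps vA.vector_space_axioms)
  moreover have "component d j (mA a b) = mA (component d j a) b + mA a (component d j b)" for a b
  proof -
    have "tn (mA a b) 1 = mT (tn a 1) (tn b 1)" by (simp add: mT_tn)
    then show ?thesis
      unfolding component_def by (simp add: derivationD(2)[OF d] coord_simps coord_mT_tn_right coord_mT_tn_left)
  qed
  ultimately show ?thesis unfolding derivations_def by blast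
qed

lemma component_finite: "finite {j. component d j a \<noteq> 0}"
  unfolding component_def by (rule coord_finite)

lemma component_in_basis: "component d j \<noteq> 0 \<Longrightarrow> j \<in> S_basis"
  unfolding component_def by (auto simp: fun_eq_iff intro: coord_in_basis)

lemma component_summable: "fam_summable S_basis (component d)"
  unfolding fam_summable_def using component_finite by (auto intro: finite_subset)

text \<open>Families in \<open>left_tensor\<close> are indexed by sets of endomorphisms of \<open>A\<close>, so the operator
  \<open>\<Sum>\<^sub>j component d j \<otimes> L\<^sub>j\<close> is written with the \<open>component d j\<close> grouped by value: the multiplier
  attached to a value \<open>i\<close> is the sum of the \<open>j\<close> with \<open>component d j = i\<close>.\<close>

definition component_values :: "('t \<Rightarrow> 't) \<Rightarrow> ('a \<Rightarrow> 'a) set" where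
  "component_values d = component d ` {j \<in> S_basis. component d j \<noteq> 0}"

definition component_mult :: "('t \<Rightarrow> 't) \<Rightarrow> ('a \<Rightarrow> 'a) \<Rightarrow> 's" where
  "component_mult d i = (\<Sum>j\<in>{j \<in> S_basis. component d j = i}. j)"

definition component_sum :: "('t \<Rightarrow> 't) \<Rightarrow> 't \<Rightarrow> 't" where
  "component_sum d = fam_sum (component_values d) (\<lambda>i. tensor_op sT tn i ((*) (component_mult d i)))"

lemma component_values_derivation:
  "d \<in> derivations sT mT \<Longrightarrow> i \<in> component_values d \<Longrightarrow> i \<in> derivations sA mA"
  unfolding component_values_def using component_derivation by auto

lemma component_sum_left_tensor:
  assumes d: "d \<in> derivations sT mT"
  shows "component_sum d \<in> DA_tensor_S"
proof -
  have "finite {i \<in> component_values d. id i a \<noteq> 0}" for a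
    by (rule finite_subset[OF _ finite_imageI[OF component_finite[of d a]]]) (auto simp: component_values_def)
  then have "fam_summable (component_values d) id" unfolding fam_summable_def by blast
  then show ?thesis
    unfolding left_tensor_def component_sum_def using component_values_derivation[OF d]
    by (intro CollectI exI[of _ "component_values d"] exI[of _ id]
        exI[of _ "\<lambda>i. (*) (component_mult d i)"]) auto
qed

lemma component_sum_tn_1:
  assumes d: "d \<in> derivations sT mT"
  shows "component_sum d (tn a 1) = d (tn a 1)"
proof -
  let ?f = "component d" and ?T = "\<lambda>i. tensor_op sT tn i ((*) (component_mult d i))"
  have T: "?T i (tn x s) = tn (i x) (component_mult d i * s)" if "i \<in> component_values d" for i x s
    by (rule tensor_op_tn[OF derivationD(1)[OF component_values_derivation[OF d that]] mult_linear])
  define K where "K = {j \<in> S_basis. ?f j a \<noteq> 0}"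
  have K: "finite K" unfolding K_def using component_finite[of d a] by (auto intro: finite_subset)
  have supp: "{i \<in> component_values d. ?T i (tn a 1) \<noteq> 0} \<subseteq> ?f ` K"
    using T by (auto simp: component_values_def K_def tn_simps)
  have "component_sum d (tn a 1) = (\<Sum>i\<in>?f ` K. ?T i (tn a 1))"
    unfolding component_sum_def
    by (rule fam_sum_eq_sum[where F = ?T, OF finite_imageI[OF K] supp])
      (auto simp: component_values_def K_def)
  also have "\<dots> = (\<Sum>i\<in>?f ` K. \<Sum>j\<in>{j \<in> K. ?f j = i}. tn (?f j a) j)"
  proof (rule sum.cong[OF refl])
    fix i assume i: "i \<in> ?f ` K"
    then have "i \<in> component_values d" unfolding component_values_def K_def by auto
    then have "?T i (tn a 1) = tn (i a) (component_mult d i)" by (simp add: T)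
    also have "\<dots> = (\<Sum>j\<in>{j \<in> K. ?f j = i}. tn (i a) j)"
    proof -
      have "{j \<in> S_basis. ?f j = i} = {j \<in> K. ?f j = i}" using i unfolding K_def by auto
      then show ?thesis by (simp add: component_mult_def tn_simps)
    qed
    also have "\<dots> = (\<Sum>j\<in>{j \<in> K. ?f j = i}. tn (?f j a) j)" by (rule sum.cong) auto
    finally show "?T i (tn a 1) = (\<Sum>j\<in>{j \<in> K. ?f j = i}. tn (?f j a) j)" .
  qed
  also have "\<dots> = (\<Sum>j\<in>K. tn (?f j a) j)" by (rule sum.image_gen[symmetric, OF K])
  also have "\<dots> = d (tn a 1)"
  proof -
    have "{j. coord (d (tn a 1)) j \<noteq> 0} \<subseteq> K" using coord_in_basis by (auto simp: K_def component_def)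
    from coord_expand_superset[OF K this] show ?thesis by (simp add: component_def)
  qed
  finally show ?thesis .
qed

lemma component_sum_plain_tensor:
  assumes "d \<in> derivations sT mT" "finite {j \<in> S_basis. component d j \<noteq> 0}"
  shows "component_sum d \<in> plain_tensor sT tn (derivations sA mA) (range (\<lambda>s. (*) s))"
proof -
  have "component_sum d = (\<Sum>i\<in>component_values d. tensor_op sT tn i ((*) (component_mult d i)))"
    unfolding component_sum_def using assms(2) by (simp add: component_values_def fam_sum_finite)
  also have "\<dots> \<in> plain_tensor sT tn (derivations sA mA) (range (\<lambda>s. (*) s))"
    unfolding plain_tensor_def
    by (rule fT.span_sum, rule fT.span_base) (use component_values_derivation[OF assms(1)] in blast)
  finally show ?thesis .
qed

definition expands_over :: "('a \<Rightarrow> 'a) set \<Rightarrow> ('t \<Rightarrow> 't) \<Rightarrow> bool" where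
  "expands_over B X \<longleftrightarrow>
     (\<exists>W \<sigma>. finite W \<and> W \<subseteq> B \<and> (\<forall>a t. X (tn a t) = (\<Sum>b\<in>W. tn (b a) (\<sigma> b * t))))"

definition centroid_expands :: "('a \<Rightarrow> 'a) set \<Rightarrow> bool" where
  "centroid_expands B \<longleftrightarrow> (\<forall>\<chi>\<in>centroid sT mT. expands_over B \<chi>)"

lemma expansion_unique:
  assumes B: "fA.independent B" and W: "finite W" "W \<subseteq> B"
    and eq: "\<And>a. (\<Sum>b\<in>W. tn (b a) (\<tau> b)) = (\<Sum>b\<in>W. tn (b a) (\<tau>' b))" and b0: "b0 \<in> W"
  shows "\<tau> b0 = \<tau>' b0"
proof -
  let ?\<delta> = "\<lambda>b. \<tau> b - \<tau>' b"
  have "S_coeff j (?\<delta> b0) = 0" for j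
  proof -
    have sum0: "(\<Sum>b\<in>W. fscale sA (S_coeff j (?\<delta> b)) b) = 0"
    proof
      fix a
      have "(\<Sum>b\<in>W. fscale sA (S_coeff j (?\<delta> b)) b) a = coord (\<Sum>b\<in>W. tn (b a) (?\<delta> b)) j"
        by (simp add: fscale_sum_apply coord_simps coord_tn)
      also have "\<dots> = 0" by (simp add: tn_simps sum_subtractf eq coord_simps)
      finally show "(\<Sum>b\<in>W. fscale sA (S_coeff j (?\<delta> b)) b) a = 0 a" by simp
    qed
    show ?thesis using fA.independentD[OF B W sum0 b0] by simp
  qed
  then show ?thesis using S_coeff_expand[of "?\<delta> b0"] by simp
qed

lemma expands_over_choice:
  assumes "\<And>s. expands_over B (\<Phi> s)"
  obtains W c where "\<And>s. finite (W s)" "\<And>s. W s \<subseteq> B" "\<And>b s. b \<notin> W s \<Longrightarrow> c b s = 0"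
    "\<And>s a t V. finite V \<Longrightarrow> W s \<subseteq> V \<Longrightarrow> \<Phi> s (tn a t) = (\<Sum>b\<in>V. tn (b a) (c b s * t))"
proof -
  have "\<forall>s. \<exists>p. finite (fst p) \<and> fst p \<subseteq> B \<and>
      (\<forall>a t. \<Phi> s (tn a t) = (\<Sum>b\<in>fst p. tn (b a) (snd p b * t)))"
  proof
    fix s
    obtain W \<sigma> where "finite W" "W \<subseteq> B" "\<forall>a t. \<Phi> s (tn a t) = (\<Sum>b\<in>W. tn (b a) (\<sigma> b * t))"
      using assms[of s] unfolding expands_over_def by blast
    then show "\<exists>p. finite (fst p) \<and> fst p \<subseteq> B \<and>
        (\<forall>a t. \<Phi> s (tn a t) = (\<Sum>b\<in>fst p. tn (b a) (snd p b * t)))"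
      by (intro exI[of _ "(W, \<sigma>)"]) simp
  qed
  then have "\<exists>P. \<forall>s. finite (fst (P s)) \<and> fst (P s) \<subseteq> B \<and>
      (\<forall>a t. \<Phi> s (tn a t) = (\<Sum>b\<in>fst (P s). tn (b a) (snd (P s) b * t)))"
    by (rule choice)
  then obtain P where "\<forall>s. finite (fst (P s)) \<and> fst (P s) \<subseteq> B \<and>
      (\<forall>a t. \<Phi> s (tn a t) = (\<Sum>b\<in>fst (P s). tn (b a) (snd (P s) b * t)))"
    by blast
  then have P: "\<And>s. finite (fst (P s))" "\<And>s. fst (P s) \<subseteq> B"
    "\<And>s a t. \<Phi> s (tn a t) = (\<Sum>b\<in>fst (P s). tn (b a) (snd (P s) b * t))"
    by blast+
  define c where "c b s = (if b \<in> fst (P s) then snd (P s) b else 0)" for b s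
  show ?thesis
  proof (rule that[of "\<lambda>s. fst (P s)" c])
    fix s a t V assume V: "finite V" "fst (P s) \<subseteq> V"
    have "\<Phi> s (tn a t) = (\<Sum>b\<in>fst (P s). tn (b a) (c b s * t))"
      unfolding P(3) by (rule sum.cong) (auto simp: c_def)
    also have "\<dots> = (\<Sum>b\<in>V. tn (b a) (c b s * t))"
      using V by (intro sum.mono_neutral_left) (auto simp: c_def tn_simps)
    finally show "\<Phi> s (tn a t) = (\<Sum>b\<in>V. tn (b a) (c b s * t))" .
  qed (use P in \<open>auto simp: c_def\<close>)
qed

text \<open>Writing \<open>tn a s = idL s (tn a 1)\<close>, a derivation vanishing on the \<open>tn a 1\<close> is determined by its
  commutators with the \<open>idL s\<close>; these lie in the centroid of \<open>T\<close>, hence expand over \<open>B\<close>.\<close>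

lemma vanishing_derivation_expansion:
  assumes ct: "centroid_expands B" and d: "d \<in> derivations sT mT" and d0: "\<And>a. d (tn a 1) = 0"
  obtains W c where "\<And>s. finite (W s)" "\<And>s. W s \<subseteq> B" "\<And>b s. b \<notin> W s \<Longrightarrow> c b s = 0"
    "\<And>s a V. finite V \<Longrightarrow> W s \<subseteq> V \<Longrightarrow> d (tn a s) = (\<Sum>b\<in>V. tn (b a) (c b s))"
    "\<And>x y a V. finite V \<Longrightarrow> W x \<subseteq> V \<Longrightarrow> W y \<subseteq> V \<Longrightarrow>
      d (tn a (x * y)) = (\<Sum>b\<in>V. tn (b a) (c b x * y + x * c b y))"
proof -
  define \<phi> where "\<phi> s x = d (idL s x) - idL s (d x)" for s x
  have "\<phi> s \<in> centroid sT mT" for s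
    unfolding \<phi>_def by (rule commutator_in_centroid[OF T_alg d idL_centroid])
  then have exp: "expands_over B (\<phi> s)" for s using ct unfolding centroid_expands_def by blast
  obtain W c where W: "\<And>s. finite (W s)" "\<And>s. W s \<subseteq> B" "\<And>b s. b \<notin> W s \<Longrightarrow> c b s = 0"
    and \<phi>: "\<And>s a t V. finite V \<Longrightarrow> W s \<subseteq> V \<Longrightarrow> \<phi> s (tn a t) = (\<Sum>b\<in>V. tn (b a) (c b s * t))"
    by (rule expands_over_choice[of B \<phi>, OF exp]) blast
  have d_idL: "d (idL s x) = \<phi> s x + idL s (d x)" for s x unfolding \<phi>_def by simp
  have d_tn: "d (tn a s) = (\<Sum>b\<in>V. tn (b a) (c b s))" if "finite V" "W s \<subseteq> V" for s a V
  proof -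
    have "d (tn a s) = \<phi> s (tn a 1)" using d_idL[of s "tn a 1"] by (simp add: idL_tn d0 vs_linearD[OF idL_linear])
    then show ?thesis by (simp add: \<phi>[OF that])
  qed
  have d_mult: "d (tn a (x * y)) = (\<Sum>b\<in>V. tn (b a) (c b x * y + x * c b y))"
    if "finite V" "W x \<subseteq> V" "W y \<subseteq> V" for x y a V
  proof -
    have "d (tn a (x * y)) = \<phi> x (tn a y) + idL x (d (tn a y))" using d_idL[of x "tn a y"] by (simp add: idL_tn)
    also have "\<dots> = (\<Sum>b\<in>V. tn (b a) (c b x * y + x * c b y))"
      by (simp add: \<phi>[OF that(1,2)] d_tn[OF that(1,3)] vs_linearD[OF idL_linear] idL_tn tn_simps
          sum.distrib)
    finally show ?thesis .
  qed
  show ?thesis by (rule that[OF W d_tn d_mult])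
qed

lemma expansion_coeffs_derivation:
  assumes B: "fA.independent B" and W: "\<And>s. finite (W s)" "\<And>s. W s \<subseteq> B"
    and c0: "\<And>b s. b \<notin> W s \<Longrightarrow> c b s = 0"
    and d: "Vector_Spaces.linear sT sT d"
    and d_tn: "\<And>s a V. finite V \<Longrightarrow> W s \<subseteq> V \<Longrightarrow> d (tn a s) = (\<Sum>b\<in>V. tn (b a) (c b s))"
    and d_mult: "\<And>x y a V. finite V \<Longrightarrow> W x \<subseteq> V \<Longrightarrow> W y \<subseteq> V \<Longrightarrow>
      d (tn a (x * y)) = (\<Sum>b\<in>V. tn (b a) (c b x * y + x * c b y))"
  shows "c b \<in> derivations sS (*)"
proof -
  have coeff: "c b z = e b"
    if V: "finite V" "V \<subseteq> B" "W z \<subseteq> V" and e0: "\<And>b. b \<notin> V \<Longrightarrow> e b = 0"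
      and eq: "\<And>a. d (tn a z) = (\<Sum>b\<in>V. tn (b a) (e b))" for z e V b
  proof (cases "b \<in> V")
    case True
    show ?thesis by (rule expansion_unique[OF B V(1,2) _ True]) (simp add: d_tn[OF V(1,3)] flip: eq)
  qed (use e0 c0 V(3) in auto)
  have "c b (x + y) = c b x + c b y" for x y
  proof (rule coeff)
    let ?V = "W x \<union> W y \<union> W (x + y)"
    show V: "finite ?V" "?V \<subseteq> B" "W (x + y) \<subseteq> ?V" using W by auto
    show "c b x + c b y = 0" if "b \<notin> ?V" for b using that c0 by simp
    have "W x \<subseteq> ?V" "W y \<subseteq> ?V" by auto
    then show "d (tn a (x + y)) = (\<Sum>b\<in>?V. tn (b a) (c b x + c b y))" for a
      by (simp add: d_tn[OF V(1)] tn_simps vs_linearD[OF d] sum.distrib)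
  qed
  moreover have "c b (sS r x) = sS r (c b x)" for r x
  proof (rule coeff)
    let ?V = "W x \<union> W (sS r x)"
    show V: "finite ?V" "?V \<subseteq> B" "W (sS r x) \<subseteq> ?V" using W by auto
    show "sS r (c b x) = 0" if "b \<notin> ?V" for b using that c0 by simp
    have "W x \<subseteq> ?V" by auto
    then show "d (tn a (sS r x)) = (\<Sum>b\<in>?V. tn (b a) (sS r (c b x)))" for a
      by (simp add: d_tn[OF V(1)] tn_simps vs_linearD[OF d] vT.scale_sum_right)
  qed
  moreover have "c b (x * y) = c b x * y + x * c b y" for x y
  proof (rule coeff)
    let ?V = "W x \<union> W y \<union> W (x * y)"
    show V: "finite ?V" "?V \<subseteq> B" "W (x * y) \<subseteq> ?V" using W by auto
    show "c b x * y + x * c b y = 0" if "b \<notin> ?V" for b using that c0 by simp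
    show "d (tn a (x * y)) = (\<Sum>b\<in>?V. tn (b a) (c b x * y + x * c b y))" for a
      by (rule d_mult[OF V(1)]) auto
  qed
  ultimately show ?thesis
    unfolding derivations_def by (auto intro!: vs_linearI simp: vS.vector_space_axioms)
qed

lemma S_part:
  assumes B: "fA.independent B" "B \<subseteq> centroid sA mA" and ct: "centroid_expands B"
    and d: "d \<in> derivations sT mT" and d0: "\<And>a. d (tn a 1) = 0"
  obtains c where "\<And>b. c b \<in> derivations sS (*)" "fam_summable B c"
    "d = fam_sum B (\<lambda>b. tensor_op sT tn b (c b))"
proof -
  obtain W c where W: "\<And>s. finite (W s)" "\<And>s. W s \<subseteq> B" and c0: "\<And>b s. b \<notin> W s \<Longrightarrow> c b s = 0"
    and d_tn: "\<And>s a V. finite V \<Longrightarrow> W s \<subseteq> V \<Longrightarrow> d (tn a s) = (\<Sum>b\<in>V. tn (b a) (c b s))"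
    and d_mult: "\<And>x y a V. finite V \<Longrightarrow> W x \<subseteq> V \<Longrightarrow> W y \<subseteq> V \<Longrightarrow>
      d (tn a (x * y)) = (\<Sum>b\<in>V. tn (b a) (c b x * y + x * c b y))"
    by (rule vanishing_derivation_expansion[OF ct d d0]) blast
  have cD: "c b \<in> derivations sS (*)" for b
    by (rule expansion_coeffs_derivation[OF B(1) W c0 derivationD(1)[OF d] d_tn d_mult])
  have sm: "fam_summable B c"
    unfolding fam_summable_def using W c0 by (metis (mono_tags, lifting) finite_subset mem_Collect_eq subsetI)
  have T: "tensor_op sT tn b (c b) (tn a s) = tn (b a) (c b s)" if "b \<in> B" for b a s
    using tensor_op_tn[OF centroidD(1) derivationD(1)[OF cD]] B(2) that by blast
  have "d = fam_sum B (\<lambda>b. tensor_op sT tn b (c b))"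
  proof (rule linear_eq_on_tensors[OF derivationD(1)[OF d] derivationD(1)])
    show "fam_sum B (\<lambda>b. tensor_op sT tn b (c b)) \<in> derivations sT mT"
      using right_tensor_props(1)[OF _ B(2)] cD sm unfolding right_tensor_def by blast
    fix a s
    have "{b \<in> B. tensor_op sT tn b (c b) (tn a s) \<noteq> 0} \<subseteq> W s"
      using T c0 by (force simp: tn_simps)
    then have "fam_sum B (\<lambda>b. tensor_op sT tn b (c b)) (tn a s) = (\<Sum>b\<in>W s. tn (b a) (c b s))"
      using W T subsetD[OF W(2)] by (subst fam_sum_eq_sum[OF W(1)]) (auto intro!: sum.cong)
    then show "d (tn a s) = fam_sum B (\<lambda>b. tensor_op sT tn b (c b)) (tn a s)"
      using d_tn[OF W(1) order_refl] by simp
  qed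
  with cD sm show ?thesis by (rule that)
qed

lemma fam_sum_in_plain_right_tensor:
  assumes B: "B \<subseteq> centroid sA mA" and c: "\<And>b. c b \<in> derivations sS (*)"
    and fin: "finite {b \<in> B. c b \<noteq> 0}"
  shows "fam_sum B (\<lambda>b. tensor_op sT tn b (c b)) \<in> plain_tensor sT tn (centroid sA mA) (derivations sS (*))"
proof -
  let ?B0 = "{b \<in> B. c b \<noteq> 0}"
  have "tensor_op sT tn b (c b) = 0" if "b \<in> B" "c b = 0" for b
    using tensor_op_zero_right[OF centroidD(1)] B that by (auto simp: zero_fun_def)
  then have "fam_sum B (\<lambda>b. tensor_op sT tn b (c b)) = (\<Sum>b\<in>?B0. tensor_op sT tn b (c b))"
    by (intro ext, subst fam_sum_eq_sum[OF fin]) (auto simp: sum_fun_apply)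
  also have "\<dots> \<in> plain_tensor sT tn (centroid sA mA) (derivations sS (*))"
    unfolding plain_tensor_def by (rule fT.span_sum, rule fT.span_base) (use B c in blast)
  finally show ?thesis .
qed

lemma derivation_split:
  assumes B: "fA.independent B" "B \<subseteq> centroid sA mA" and ct: "centroid_expands B"
    and d: "d \<in> derivations sT mT"
  obtains c where "\<And>b. c b \<in> derivations sS (*)" "fam_summable B c"
    "d = component_sum d + fam_sum B (\<lambda>b. tensor_op sT tn b (c b))"
proof -
  let ?Y = "component_sum d"
  have "d - ?Y \<in> derivations sT mT"
    using fT.subspace_diff[OF derivations_subspace[OF T_alg] d
        left_tensor_props(1)[OF component_sum_left_tensor[OF d]]] .
  moreover have "(d - ?Y) (tn a 1) = 0" for a by (simp add: component_sum_tn_1[OF d])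
  ultimately obtain c where c: "\<And>b. c b \<in> derivations sS (*)" "fam_summable B c"
    "d - ?Y = fam_sum B (\<lambda>b. tensor_op sT tn b (c b))"
    by (rule S_part[OF B ct]) blast
  have "d = ?Y + fam_sum B (\<lambda>b. tensor_op sT tn b (c b))" by (simp flip: c(3))
  with c(1,2) show ?thesis by (rule that)
qed

lemma star_decomp_basis:
  assumes B: "is_basis_of (fscale sA) (centroid sA mA) B" and ct: "centroid_expands B"
  shows "direct_sum_decomp (derivations sT mT) DA_tensor_S (CA_tensor_DS B)"
proof (rule direct_sum_decomp_derivations)
  have B': "fA.independent B" "B \<subseteq> centroid sA mA" using B unfolding is_basis_of_def by auto
  show "X \<in> derivations sT mT \<and> (\<forall>s t. X (idL s t) = idL s (X t))" if "X \<in> DA_tensor_S" for X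
    using left_tensor_props[OF that] by blast
  show "X \<in> derivations sT mT \<and> (\<forall>a. X (tn a 1) = 0)" if "X \<in> CA_tensor_DS B" for X
    using right_tensor_props[OF that B'(2)] by blast
  show "0 \<in> DA_tensor_S" "0 \<in> CA_tensor_DS B" by (rule zero_in_left_tensor, rule zero_in_right_tensor[OF B'(2)])
  show "\<exists>Y\<in>DA_tensor_S. \<exists>Z\<in>CA_tensor_DS B. d = Y + Z" if d: "d \<in> derivations sT mT" for d
  proof -
    obtain c where "\<And>b. c b \<in> derivations sS (*)" "fam_summable B c"
      "d = component_sum d + fam_sum B (\<lambda>b. tensor_op sT tn b (c b))"
      by (rule derivation_split[OF B'(1,2) ct d]) blast
    then show ?thesis using component_sum_left_tensor[OF d] unfolding right_tensor_def by blast
  qed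
qed

lemma S_basis_finite: "finite_dim sS \<Longrightarrow> finite S_basis"
  unfolding finite_dim_def using vS.independent_span_bound[OF _ S_basis(1)] by auto

lemma plain_decomp_basis:
  assumes B: "is_basis_of (fscale sA) (centroid sA mA) B" and ct: "centroid_expands B"
    and fin_A: "finite_dim sS \<or> finitely_determined (derivations sA mA)"
    and fin_S: "finite B \<or> finitely_determined (derivations sS (*))"
  shows "plain_decomp sA mA sS sT tn mT"
  unfolding plain_decomp_def
proof (rule direct_sum_decomp_derivations)
  have B': "fA.independent B" "B \<subseteq> centroid sA mA" using B unfolding is_basis_of_def by auto
  show "X \<in> derivations sT mT \<and> (\<forall>s t. X (idL s t) = idL s (X t))"
    if "X \<in> plain_tensor sT tn (derivations sA mA) (range (\<lambda>s. (*) s))" for X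
    using plain_left_tensor_props[OF that] by blast
  show "X \<in> derivations sT mT \<and> (\<forall>a. X (tn a 1) = 0)"
    if "X \<in> plain_tensor sT tn (centroid sA mA) (derivations sS (*))" for X
    using plain_right_tensor_props[OF that] by blast
  show "0 \<in> plain_tensor sT tn (derivations sA mA) (range (\<lambda>s. (*) s))"
    "0 \<in> plain_tensor sT tn (centroid sA mA) (derivations sS (*))"
    unfolding plain_tensor_def by (rule fT.span_zero)+
  fix d assume d: "d \<in> derivations sT mT"
  then obtain c where c: "\<And>b. c b \<in> derivations sS (*)" "fam_summable B c"
    and d_eq: "d = component_sum d + fam_sum B (\<lambda>b. tensor_op sT tn b (c b))"
    by (rule derivation_split[OF B'(1,2) ct]) blast
  have "finite {j \<in> S_basis. component d j \<noteq> 0}"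
    using fin_A
  proof
    assume "finitely_determined (derivations sA mA)"
    then show ?thesis
      by (rule finite_support_if_finitely_determined[OF _ _ component_summable])
        (use component_derivation[OF d] in blast)
  qed (simp add: S_basis_finite)
  moreover have "finite {b \<in> B. c b \<noteq> 0}"
    using fin_S
  proof
    assume "finitely_determined (derivations sS (*))"
    then show ?thesis by (rule finite_support_if_finitely_determined[OF _ _ c(2)]) (use c(1) in blast)
  qed simp
  ultimately show "\<exists>Y\<in>plain_tensor sT tn (derivations sA mA) (range (\<lambda>s. (*) s)).
      \<exists>Z\<in>plain_tensor sT tn (centroid sA mA) (derivations sS (*)). d = Y + Z"
    using d_eq component_sum_plain_tensor[OF d] fam_sum_in_plain_right_tensor[of B c, OF B'(2) c(1)]
    by blast
qed

section \<open>Centroid elements of the tensor product\<close>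

lemma expands_over_zero: "expands_over B 0"
  unfolding expands_over_def by (intro exI[of _ "{}"]) simp

lemma expands_over_add:
  assumes "expands_over B X" "expands_over B Y"
  shows "expands_over B (X + Y)"
proof -
  obtain W1 \<sigma>1 where 1: "finite W1" "W1 \<subseteq> B" "\<And>a t. X (tn a t) = (\<Sum>b\<in>W1. tn (b a) (\<sigma>1 b * t))"
    using assms(1) unfolding expands_over_def by blast
  obtain W2 \<sigma>2 where 2: "finite W2" "W2 \<subseteq> B" "\<And>a t. Y (tn a t) = (\<Sum>b\<in>W2. tn (b a) (\<sigma>2 b * t))"
    using assms(2) unfolding expands_over_def by blast
  let ?W = "W1 \<union> W2"
  let ?\<sigma> = "\<lambda>b. (if b \<in> W1 then \<sigma>1 b else 0) + (if b \<in> W2 then \<sigma>2 b else 0)"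
  have restrict: "(\<Sum>b\<in>V. tn (b a) (\<tau> b * t)) = (\<Sum>b\<in>?W. tn (b a) ((if b \<in> V then \<tau> b else 0) * t))"
    if "V \<subseteq> ?W" for V \<tau> a t
    using that 1(1) 2(1) by (intro sum.mono_neutral_cong_left) (auto simp: tn_simps)
  have "(X + Y) (tn a t) = (\<Sum>b\<in>?W. tn (b a) (?\<sigma> b * t))" for a t
  proof -
    have "(X + Y) (tn a t) = (\<Sum>b\<in>?W. tn (b a) ((if b \<in> W1 then \<sigma>1 b else 0) * t)) +
        (\<Sum>b\<in>?W. tn (b a) ((if b \<in> W2 then \<sigma>2 b else 0) * t))"
      by (simp only: plus_fun_apply 1(3) 2(3) restrict[OF Un_upper1] restrict[OF Un_upper2])
    also have "\<dots> = (\<Sum>b\<in>?W. tn (b a) (?\<sigma> b * t))"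
      by (simp only: distrib_right tn_simps(2) sum.distrib)
    finally show ?thesis .
  qed
  then show ?thesis unfolding expands_over_def using 1(1,2) 2(1,2) by (intro exI[of _ ?W] exI[of _ ?\<sigma>]) auto
qed

lemma expands_over_scale:
  assumes "expands_over B X"
  shows "expands_over B (fscale sT r X)"
proof -
  obtain W \<sigma> where W: "finite W" "W \<subseteq> B" "\<And>a t. X (tn a t) = (\<Sum>b\<in>W. tn (b a) (\<sigma> b * t))"
    using assms unfolding expands_over_def by blast
  have "fscale sT r X (tn a t) = (\<Sum>b\<in>W. tn (b a) (sS r (\<sigma> b) * t))" for a t
    by (simp add: fscale_def W(3) vT.scale_sum_right tn_simps S_simps)
  then show ?thesis
    unfolding expands_over_def using W(1,2) by (intro exI[of _ W] exI[of _ "\<lambda>b. sS r (\<sigma> b)"]) auto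
qed

lemma expands_over_sum:
  "finite F \<Longrightarrow> (\<And>j. j \<in> F \<Longrightarrow> expands_over B (X j)) \<Longrightarrow> expands_over B (\<Sum>j\<in>F. X j)"
  by (induction F rule: finite_induct) (simp_all add: expands_over_zero expands_over_add)

lemma expands_over_cong:
  "expands_over B X \<Longrightarrow> (\<And>a t. Y (tn a t) = X (tn a t)) \<Longrightarrow> expands_over B Y"
  unfolding expands_over_def by simp

lemma expands_over_tensor_op_mult:
  assumes "\<gamma> \<in> fA.span B" "\<gamma> \<in> centroid sA mA"
  shows "expands_over B (tensor_op sT tn \<gamma> ((*) s))"
proof -
  obtain W r where W: "finite W" "W \<subseteq> B" "(\<Sum>b\<in>W. fscale sA (r b) b) = \<gamma>"
    using assms(1) unfolding fA.span_explicit by blast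
  have "tensor_op sT tn \<gamma> ((*) s) (tn a t) = (\<Sum>b\<in>W. tn (b a) (sS (r b) s * t))" for a t
    using fscale_sum_apply[of sA r "\<lambda>b. b" W a] W(3)
    by (simp add: tensor_op_tn[OF centroidD(1)[OF assms(2)] mult_linear] tn_simps S_simps)
  then show ?thesis
    unfolding expands_over_def using W(1,2) by (intro exI[of _ W] exI[of _ "\<lambda>b. sS (r b) s"]) auto
qed

text \<open>Only the surjectivity of \<open>\<psi>\<close> is needed: it writes every element of the centroid of \<open>T\<close>
  as a finite sum of operators \<open>\<gamma> \<otimes> L\<^sub>s\<close>.\<close>

lemma centroid_expands_if_psi_bij:
  fixes sC :: "'k \<Rightarrow> 'c::ab_group_add \<Rightarrow> 'c" and tc :: "('a \<Rightarrow> 'a) \<Rightarrow> 's \<Rightarrow> 'c"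
    and \<psi> :: "'c \<Rightarrow> ('t \<Rightarrow> 't)"
  assumes TP: "is_tensor_product (fscale sA) (centroid sA mA) sS sC tc"
    and lin: "Vector_Spaces.linear sC (fscale sT) \<psi>"
    and gen: "\<forall>\<gamma> \<in> centroid sA mA. \<forall>s. \<psi> (tc \<gamma> s) = tensor_op sT tn \<gamma> ((*) s)"
    and bij: "bij_betw \<psi> UNIV (centroid sT mT)"
    and B: "fA.span B = centroid sA mA"
  shows "centroid_expands B"
proof -
  have mC: "module sC" using TP unfolding is_tensor_product_def module_iff_vector_space by blast
  have span: "c \<in> module.span sC ((\<lambda>(a, w). tc a w) ` (centroid sA mA \<times> UNIV))" for c
    using TP unfolding is_tensor_product_def by blast
  have sub: "module.subspace sC {c. expands_over B (\<psi> c)}"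
    unfolding module.subspace_def[OF mC]
    by (simp add: vs_linearD[OF lin] expands_over_zero expands_over_add expands_over_scale)
  have "expands_over B (\<psi> x)" if "x \<in> (\<lambda>(a, w). tc a w) ` (centroid sA mA \<times> UNIV)" for x
    using that gen B expands_over_tensor_op_mult by auto
  then have exp: "expands_over B (\<psi> c)" for c by (rule module.span_induct[OF mC span sub])
  show ?thesis
    unfolding centroid_expands_def
  proof
    fix \<chi> assume "\<chi> \<in> centroid sT mT"
    then obtain c where "\<chi> = \<psi> c" using bij unfolding bij_betw_def by blast
    then show "expands_over B \<chi>" using exp by simp
  qed
qed

lemma component_centroid:
  assumes \<chi>: "\<chi> \<in> centroid sT mT"
  shows "component \<chi> j \<in> centroid sA mA"
proof -
  have prod: "tn (mA a b) 1 = mT (tn a 1) (tn b 1)" for a b by (simp add: mT_tn)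
  have "Vector_Spaces.linear sA sA (component \<chi> j)"
    unfolding component_def
    by (rule vs_linearI)
      (simp_all add: tn_simps vs_linearD[OF centroidD(1)[OF \<chi>]] coord_simps vA.vector_space_axioms)
  moreover have "component \<chi> j (mA a b) = mA (component \<chi> j a) b" for a b
    unfolding component_def prod by (simp only: centroidD(2)[OF \<chi>] coord_mT_tn_right)
  moreover have "component \<chi> j (mA a b) = mA a (component \<chi> j b)" for a b
    unfolding component_def prod by (simp only: centroidD(3)[OF \<chi>] coord_mT_tn_left)
  ultimately show ?thesis unfolding centroid_def by blast
qed

text \<open>Perfectness of \<open>A\<close> is used here: the formula is checked on products \<open>mA a1 a2\<close>, where the
  centroid property moves \<open>\<chi>\<close> onto the factor \<open>tn a1 1\<close>.\<close>

lemma centroid_on_tensors: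
  assumes \<chi>: "\<chi> \<in> centroid sT mT" and F: "finite F" "{j. component \<chi> j \<noteq> 0} \<subseteq> F"
  shows "\<chi> (tn a t) = (\<Sum>j\<in>F. tn (component \<chi> j a) (j * t))"
  using vA.vector_space_axioms A_perfect
proof (induction a rule: perfect_induct)
  case (mult a1 a2)
  have "{j. coord (\<chi> (tn a1 1)) j \<noteq> 0} \<subseteq> F" using F(2) by (auto simp: component_def fun_eq_iff)
  then have exp: "\<chi> (tn a1 1) = (\<Sum>j\<in>F. tn (component \<chi> j a1) j)"
    unfolding component_def by (rule coord_expand_superset[OF F(1)])
  have "\<chi> (tn (mA a1 a2) t) = mT (\<chi> (tn a1 1)) (tn a2 t)"
    by (simp flip: centroidD(2)[OF \<chi>] add: mT_tn)
  also have "\<dots> = (\<Sum>j\<in>F. tn (component \<chi> j (mA a1 a2)) (j * t))"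
    by (simp add: exp mT_simps mT_tn centroidD(2)[OF component_centroid[OF \<chi>]])
  finally show ?case .
next
  case zero
  show ?case by (simp add: tn_simps vs_linearD[OF centroidD(1)[OF \<chi>]]
      vs_linearD[OF centroidD(1)[OF component_centroid[OF \<chi>]]])
next
  case (add x y)
  then show ?case by (simp add: tn_simps vs_linearD[OF centroidD(1)[OF \<chi>]] sum.distrib
      vs_linearD[OF centroidD(1)[OF component_centroid[OF \<chi>]]])
next
  case (scale c x)
  then show ?case by (simp add: tn_simps vs_linearD[OF centroidD(1)[OF \<chi>]] vT.scale_sum_right
      vs_linearD[OF centroidD(1)[OF component_centroid[OF \<chi>]]])
qed

lemma centroid_expands_if_finite:
  assumes B: "fA.span B = centroid sA mA"
    and fin: "finite_dim sS \<or> finitely_determined (centroid sA mA)"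
  shows "centroid_expands B"
  unfolding centroid_expands_def
proof
  fix \<chi> assume \<chi>: "\<chi> \<in> centroid sT mT"
  define F where "F = {j \<in> S_basis. component \<chi> j \<noteq> 0}"
  have F_fin: "finite F"
    using fin
  proof
    assume "finitely_determined (centroid sA mA)"
    then show ?thesis unfolding F_def
      by (rule finite_support_if_finitely_determined[OF _ _ component_summable])
        (use component_centroid[OF \<chi>] in blast)
  qed (simp add: F_def S_basis_finite)
  have F_sub: "{j. component \<chi> j \<noteq> 0} \<subseteq> F" using component_in_basis by (auto simp: F_def)
  have "\<chi> (tn a t) = (\<Sum>j\<in>F. tensor_op sT tn (component \<chi> j) ((*) j)) (tn a t)" for a t
    unfolding centroid_on_tensors[OF \<chi> F_fin F_sub, of a t] sum_fun_apply
    by (simp add: tensor_op_tn[OF centroidD(1)[OF component_centroid[OF \<chi>]] mult_linear])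
  moreover have "expands_over B (\<Sum>j\<in>F. tensor_op sT tn (component \<chi> j) ((*) j))"
    using F_fin B component_centroid[OF \<chi>]
    by (intro expands_over_sum expands_over_tensor_op_mult) auto
  ultimately show "expands_over B \<chi>" by (rule expands_over_cong[rotated])
qed

lemma centroid_basis_exists: "\<exists>B. is_basis_of (fscale sA) (centroid sA mA) B"
proof -
  obtain B where B: "B \<subseteq> centroid sA mA" "fA.independent B" "centroid sA mA \<subseteq> fA.span B"
    using fA.basis_exists[of "centroid sA mA"] by metis
  then have "fA.span B = centroid sA mA"
    using fA.span_minimal[OF B(1) centroid_subspace[OF A_alg]] by blast
  then show ?thesis unfolding is_basis_of_def using B by blast
qed

lemma star_decomp_if_centroid_expands:
  assumes "\<And>B. fA.span B = centroid sA mA \<Longrightarrow> centroid_expands B"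
  shows "star_decomp sA mA sS sT tn mT"
  unfolding star_decomp_def using assms star_decomp_basis by (auto simp: is_basis_of_def)

lemma star_decomp_if_psi_bij:
  fixes sC :: "'k \<Rightarrow> 'c::ab_group_add \<Rightarrow> 'c" and tc :: "('a \<Rightarrow> 'a) \<Rightarrow> 's \<Rightarrow> 'c"
    and \<psi> :: "'c \<Rightarrow> ('t \<Rightarrow> 't)"
  assumes "is_tensor_product (fscale sA) (centroid sA mA) sS sC tc"
    and "Vector_Spaces.linear sC (fscale sT) \<psi>"
    and "\<forall>\<gamma> \<in> centroid sA mA. \<forall>s. \<psi> (tc \<gamma> s) = tensor_op sT tn \<gamma> ((*) s)"
    and "bij_betw \<psi> UNIV (centroid sT mT)"
  shows "star_decomp sA mA sS sT tn mT"
  using centroid_expands_if_psi_bij[OF assms] by (rule star_decomp_if_centroid_expands)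

lemma star_decomp_if_finite:
  assumes "finite_dim sS \<or> alg_fin_gen sA mA \<or> pfgc sA mA \<or> unital_alg mA"
  shows "star_decomp sA mA sS sT tn mT"
proof (rule star_decomp_if_centroid_expands, rule centroid_expands_if_finite)
  show "finite_dim sS \<or> finitely_determined (centroid sA mA)"
    using assms centroid_finitely_determined_if_alg_fin_gen[OF A_alg]
      centroid_finitely_determined_if_fin_gen_module[OF A_alg A_perfect _ order_refl]
      centroid_finitely_determined_if_unital[OF A_alg]
    unfolding pfgc_def by blast
qed

lemma plain_decomp_if_finite:
  assumes "finite_dim sA \<or> finite_dim sS \<or>
    ((finite_dim_subspace (fscale sA) (centroid sA mA) \<or> alg_fin_gen sS (*)) \<and>
     (alg_fin_gen sA mA \<or>
      (fin_gen_module (centroid sA mA) \<and>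
        (\<forall>d \<in> derivations sA mA. \<forall>\<gamma> \<in> centroid sA mA. d \<circ> \<gamma> = \<gamma> \<circ> d)) \<or>
      fin_gen_module (dcentroid sA mA)))"
  shows "plain_decomp sA mA sS sT tn mT"
proof -
  obtain B where B: "is_basis_of (fscale sA) (centroid sA mA) B" using centroid_basis_exists by blast
  have A_fd: "finitely_determined (centroid sA mA) \<and> finitely_determined (derivations sA mA)"
    if "finite_dim sA"
    using that by (intro conjI finitely_determined_if_finite_dim[where sc = sA])
      (auto intro: centroidD(1) derivationD(1))
  have C_fd: "finite_dim_subspace (fscale sA) (centroid sA mA)" if "finite_dim sA"
    by (rule finite_dim_subspace_if_finite_dim[OF vA.vector_space_axioms that centroid_subspace[OF A_alg]
          centroidD(1)])
  have DS_fd: "finitely_determined (derivations sS (*))" if "finite_dim sS \<or> alg_fin_gen sS (*)"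
    using that
  proof
    assume "finite_dim sS"
    then show ?thesis by (rule finitely_determined_if_finite_dim[where sc = sS]) (rule derivationD(1))
  qed (rule derivations_finitely_determined_if_alg_fin_gen[OF S_is_algebra])
  have fin_A: "finite_dim sS \<or> finitely_determined (centroid sA mA) \<and> finitely_determined (derivations sA mA)"
    and "finite_dim_subspace (fscale sA) (centroid sA mA) \<or> finitely_determined (derivations sS (*))"
    using assms A_fd C_fd DS_fd centroid_derivations_finitely_determined[OF A_alg A_perfect] by blast+
  then have fin_S: "finite B \<or> finitely_determined (derivations sS (*))"
    using B independent_finite_if_finite_dim_subspace[OF fA.vector_space_axioms]
    unfolding is_basis_of_def by blast
  have "centroid_expands B"
    using B fin_A centroid_expands_if_finite unfolding is_basis_of_def by blast
  then show ?thesis using plain_decomp_basis[OF B _ _ fin_S] fin_A by blast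
qed

end

theorem theorem2p5:
  fixes sA :: "'k::field \<Rightarrow> 'a::ab_group_add \<Rightarrow> 'a" and mA :: "'a \<Rightarrow> 'a \<Rightarrow> 'a"
    and sS :: "'k \<Rightarrow> 's::comm_ring_1 \<Rightarrow> 's"
    and sT :: "'k \<Rightarrow> 't::ab_group_add \<Rightarrow> 't" and tn :: "'a \<Rightarrow> 's \<Rightarrow> 't" and mT :: "'t \<Rightarrow> 't \<Rightarrow> 't"
    and sC :: "'k \<Rightarrow> 'c::ab_group_add \<Rightarrow> 'c" and tc :: "('a \<Rightarrow> 'a) \<Rightarrow> 's \<Rightarrow> 'c"
  assumes A_alg: "is_algebra sA mA"
    and A_perfect: "perfect sA mA"
    and S_vs: "vector_space sS"
    and S_alg: "\<forall>c x y. sS c (x * y) = sS c x * y"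
    and T_tensor: "is_tensor_product sA UNIV sS sT tn"
    and T_alg: "is_algebra sT mT"
    and T_mult: "\<forall>a b s t. mT (tn a s) (tn b t) = tn (mA a b) (s * t)"
  shows
    "(\<forall>\<psi> :: 'c \<Rightarrow> ('t \<Rightarrow> 't).
        is_tensor_product (fscale sA) (centroid sA mA) sS sC tc \<and>
        Vector_Spaces.linear sC (fscale sT) \<psi> \<and>
        (\<forall>\<gamma> \<in> centroid sA mA. \<forall>s. \<psi> (tc \<gamma> s) = tensor_op sT tn \<gamma> ((*) s)) \<and>
        bij_betw \<psi> UNIV (centroid sT mT)
        \<longrightarrow> star_decomp sA mA sS sT tn mT)
     \<and> ((finite_dim sS \<or> alg_fin_gen sA mA \<or> pfgc sA mA \<or> unital_alg mA)
        \<longrightarrow> star_decomp sA mA sS sT tn mT)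
     \<and> ((finite_dim sA \<or> finite_dim sS \<or>
         ((finite_dim_subspace (fscale sA) (centroid sA mA) \<or> alg_fin_gen sS (*)) \<and>
          (alg_fin_gen sA mA \<or>
           (fin_gen_module (centroid sA mA) \<and>
             (\<forall>d \<in> derivations sA mA. \<forall>\<gamma> \<in> centroid sA mA. d \<circ> \<gamma> = \<gamma> \<circ> d)) \<or>
           fin_gen_module (dcentroid sA mA))))
        \<longrightarrow> plain_decomp sA mA sS sT tn mT)"
proof -
  interpret tensor_algebra sA mA sS sT tn mT
    using A_alg S_vs T_alg A_perfect S_alg T_tensor T_mult
    by (intro tensor_algebra.intro tensor_algebra_axioms.intro) (auto simp: is_algebra_def)
  show ?thesis
    using star_decomp_if_psi_bij[where sC = sC and tc = tc] star_decomp_if_finite plain_decomp_if_finite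
    by blast
qed

end
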